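(* Let $G_1$ be a finite cubic bridgeless graph. Then the line graph $L(G_1)$ is symmetric with respect to graph entropy, i.e., the uniform distribution on $V(L(G_1))$ maximizes $H(L(G_1),P)$ over all probability distributions $P$ on $V(L(G_1))$.
   Context: The line graph $L(G_1)$ has vertex set $E(G_1)$, two edges adjacent when they share an endpoint. For a finite graph $G$ with $V(G)=\{1,\dots,n\}$, the vertex packing polytope $VP(G)$ is the convex hull of the characteristic vectors of independent sets of $G$, and for a probability distribution $P=(p_1,\dots,p_n)$ on $V(G)$ the graph entropy is $H(G,P)=\min_{\mathbf a\in VP(G)}\sum_{i=1}^n p_i\log(1/a_i)$. *)

theory Defs
  imports Complex_Main
begin

definition simple_graph :: "'a set \<Rightarrow> 'a set set \<Rightarrow> bool" where
  "simple_graph V E \<longleftrightarrow> finite V \<and> (\<forall>e\<in>E. e \<subseteq> V \<and> card e = 2)"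

definition degree :: "'a set set \<Rightarrow> 'a \<Rightarrow> nat" where
  "degree E v = card {e\<in>E. v \<in> e}"

definition cubic_graph :: "'a set \<Rightarrow> 'a set set \<Rightarrow> bool" where
  "cubic_graph V E \<longleftrightarrow> simple_graph V E \<and> (\<forall>v\<in>V. degree E v = 3)"

definition adj_edges :: "'a set set \<Rightarrow> 'a \<Rightarrow> 'a \<Rightarrow> bool" where
  "adj_edges E u v \<longleftrightarrow> u \<noteq> v \<and> {u, v} \<in> E"

definition is_bridge :: "'a set set \<Rightarrow> 'a set \<Rightarrow> bool" where
  "is_bridge E e \<longleftrightarrow> e \<in> E \<and>
     (\<exists>u v. e = {u, v} \<and> u \<noteq> v \<and> \<not> (adj_edges (E - {e}))\<^sup>*\<^sup>* u v)"

definition bridgeless :: "'a set set \<Rightarrow> bool" where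
  "bridgeless E \<longleftrightarrow> (\<forall>e\<in>E. \<not> is_bridge E e)"

text \<open>The line graph L(G) has vertex set E(G); two (distinct) edges are adjacent
  when they share an endpoint.\<close>
definition line_adj :: "'a set \<Rightarrow> 'a set \<Rightarrow> bool" where
  "line_adj e f \<longleftrightarrow> e \<noteq> f \<and> e \<inter> f \<noteq> {}"

text \<open>A graph here is a finite vertex set W together with an adjacency relation.\<close>

definition independent_set :: "'b set \<Rightarrow> ('b \<Rightarrow> 'b \<Rightarrow> bool) \<Rightarrow> 'b set \<Rightarrow> bool" where
  "independent_set W adj S \<longleftrightarrow> S \<subseteq> W \<and> (\<forall>x\<in>S. \<forall>y\<in>S. \<not> adj x y)"

text \<open>VP(G): the convex hull of the characteristic vectors (on W) of the
  independent sets, i.e. the set of convex combinations of them (the family of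
  independent sets is finite). Vectors are functions W -> real; values outside W
  are irrelevant and fixed to 0.\<close>
definition VP :: "'b set \<Rightarrow> ('b \<Rightarrow> 'b \<Rightarrow> bool) \<Rightarrow> ('b \<Rightarrow> real) set" where
  "VP W adj = {a. \<exists>c :: 'b set \<Rightarrow> real.
      (\<forall>S. c S \<ge> 0) \<and> (\<forall>S. c S \<noteq> 0 \<longrightarrow> independent_set W adj S) \<and>
      (\<Sum>S\<in>{S. independent_set W adj S}. c S) = 1 \<and>
      (\<forall>i. a i = (\<Sum>S\<in>{S. independent_set W adj S}. c S * (if i \<in> S then 1 else 0)))}"

definition prob_dist :: "'b set \<Rightarrow> ('b \<Rightarrow> real) \<Rightarrow> bool" where
  "prob_dist W p \<longleftrightarrow> (\<forall>i\<in>W. p i \<ge> 0) \<and> (\<Sum>i\<in>W. p i) = 1"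

text \<open>H(G,P) = min over a in VP(G) of sum_i p_i log(1/a_i), with the usual
  conventions 0 log(1/0) = 0 and p log(1/0) = +infinity for p > 0. Hence only
  points a with a_i > 0 whenever p_i > 0 are admissible, and only indices with
  p_i > 0 contribute. The minimum is attained (compactness), so it coincides with
  the infimum taken here.\<close>
definition graph_entropy :: "'b set \<Rightarrow> ('b \<Rightarrow> 'b \<Rightarrow> bool) \<Rightarrow> ('b \<Rightarrow> real) \<Rightarrow> real" where
  "graph_entropy W adj p = Inf {(\<Sum>i\<in>{i\<in>W. p i > 0}. p i * log 2 (1 / a i)) | a.
      a \<in> VP W adj \<and> (\<forall>i\<in>W. p i > 0 \<longrightarrow> a i > 0)}"

definition uniform_dist :: "'b set \<Rightarrow> 'b \<Rightarrow> real" where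
  "uniform_dist W = (\<lambda>i. 1 / real (card W))"

definition entropy_symmetric :: "'b set \<Rightarrow> ('b \<Rightarrow> 'b \<Rightarrow> bool) \<Rightarrow> bool" where
  "entropy_symmetric W adj \<longleftrightarrow>
     (\<forall>p. prob_dist W p \<longrightarrow> graph_entropy W adj p \<le> graph_entropy W adj (uniform_dist W))"

end

theory Submission
  imports Defs
begin

text \<open>
  By Edmonds' perfect matching polytope theorem, every point \<open>x\<close> with \<open>x \<ge> 0\<close>,
  \<open>x(\<delta>(v)) = 1\<close> at every vertex and \<open>x(\<delta>(S)) \<ge> 1\<close> for every odd vertex set \<open>S\<close> is a convex
  combination of perfect matchings. In a cubic graph the constant \<open>1/3\<close> satisfies the vertex
  equations, and for odd \<open>S\<close> the number \<open>|\<delta>(S)| = 3|S| - 2|E(S)|\<close> is odd, hence \<open>\<ge> 3\<close> when there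
  is no bridge. Perfect matchings of \<open>G\<^sub>1\<close> are independent sets of \<open>L(G\<^sub>1)\<close>, so the constant \<open>1/3\<close>
  lies in \<open>VP(L(G\<^sub>1))\<close> and \<open>H(L(G\<^sub>1), P) \<le> log 3\<close> for every \<open>P\<close>. Conversely, a matching has at
  most \<open>|V|/2 = |E|/3\<close> edges, so the coordinates of any point of \<open>VP(L(G\<^sub>1))\<close> sum to at most
  \<open>|E|/3\<close>, and concavity of the logarithm gives \<open>H(L(G\<^sub>1), U) \<ge> log 3\<close> for the uniform \<open>U\<close>.

  Edmonds' theorem is proved for multigraphs by induction on \<open>|V| + |E|\<close>. An edge with \<open>x = 0\<close> is
  deleted. Along a tight nontrivial odd cut both shores are contracted, and the two decompositions
  are glued by conditioning on the unique cut edge. Vertices of degree one or two are handled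
  directly. Otherwise \<open>|V| < |E|\<close>, so the incidence matrix has a kernel vector \<open>y\<close>; moving \<open>x\<close>
  along \<open>\<plusminus>y\<close> until a constraint becomes tight writes \<open>x\<close> as a convex combination of two
  reducible points.
\<close>

section \<open>Multigraphs and the perfect matching polytope\<close>

text \<open>Edges are abstract and carry their endpoints, so that contraction may create parallel edges.\<close>
definition multigraph :: "'v set \<Rightarrow> 'e set \<Rightarrow> ('e \<Rightarrow> 'v set) \<Rightarrow> bool" where
  "multigraph V E ends \<longleftrightarrow> finite V \<and> finite E \<and> (\<forall>e\<in>E. ends e \<subseteq> V \<and> card (ends e) = 2)"

definition incident_edges :: "'e set \<Rightarrow> ('e \<Rightarrow> 'v set) \<Rightarrow> 'v \<Rightarrow> 'e set" where
  "incident_edges E ends v = {e\<in>E. v \<in> ends e}"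

definition cut_edges :: "'e set \<Rightarrow> ('e \<Rightarrow> 'v set) \<Rightarrow> 'v set \<Rightarrow> 'e set" where
  "cut_edges E ends S = {e\<in>E. ends e \<inter> S \<noteq> {} \<and> \<not> ends e \<subseteq> S}"

definition perfect_matching :: "'v set \<Rightarrow> 'e set \<Rightarrow> ('e \<Rightarrow> 'v set) \<Rightarrow> 'e set \<Rightarrow> bool" where
  "perfect_matching V E ends M \<longleftrightarrow> M \<subseteq> E \<and> (\<forall>v\<in>V. card (incident_edges M ends v) = 1)"

definition in_pm_polytope :: "'v set \<Rightarrow> 'e set \<Rightarrow> ('e \<Rightarrow> 'v set) \<Rightarrow> ('e \<Rightarrow> real) \<Rightarrow> bool" where
  "in_pm_polytope V E ends x \<longleftrightarrow> (\<forall>e\<in>E. 0 \<le> x e) \<and> (\<forall>v\<in>V. sum x (incident_edges E ends v) = 1) \<and>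
     (\<forall>S. S \<subseteq> V \<longrightarrow> odd (card S) \<longrightarrow> 1 \<le> sum x (cut_edges E ends S))"

definition in_pm_hull :: "'v set \<Rightarrow> 'e set \<Rightarrow> ('e \<Rightarrow> 'v set) \<Rightarrow> ('e \<Rightarrow> real) \<Rightarrow> bool" where
  "in_pm_hull V E ends x \<longleftrightarrow> (\<exists>c. (\<forall>M. 0 \<le> c M) \<and> (\<forall>M. c M \<noteq> 0 \<longrightarrow> perfect_matching V E ends M) \<and>
      sum c (Pow E) = 1 \<and> (\<forall>e\<in>E. sum c {M\<in>Pow E. e \<in> M} = x e))"

lemma multigraph_finite: "multigraph V E ends \<Longrightarrow> finite V" "multigraph V E ends \<Longrightarrow> finite E"
  by (auto simp: multigraph_def)

lemma multigraph_ends: "multigraph V E ends \<Longrightarrow> e \<in> E \<Longrightarrow> ends e \<subseteq> V"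
  "multigraph V E ends \<Longrightarrow> e \<in> E \<Longrightarrow> card (ends e) = 2"
  by (auto simp: multigraph_def)

lemma multigraph_ends_from:
  assumes "multigraph V E ends" "e \<in> E" "v \<in> ends e"
  obtains u where "ends e = {v, u}" "u \<noteq> v"
proof -
  obtain a b where "ends e = {a, b}" "a \<noteq> b"
    using multigraph_ends(2)[OF assms(1,2)] card_2_iff by metis
  then show thesis using that assms(3) by (metis insert_commute insertE singletonD)
qed

lemma incident_edges_eq_cut_edges:
  assumes "multigraph V E ends" shows "incident_edges E ends v = cut_edges E ends {v}"
proof -
  have "\<not> ends e \<subseteq> {v}" if "e \<in> E" for e
    using multigraph_ends(2)[OF assms that] by (auto dest!: subset_singletonD)
  then show ?thesis by (auto simp: incident_edges_def cut_edges_def)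
qed

lemma cut_edges_compl: "multigraph V E ends \<Longrightarrow> S \<subseteq> V \<Longrightarrow> cut_edges E ends (V - S) = cut_edges E ends S"
  unfolding cut_edges_def by (blast dest: multigraph_ends(1))

lemma cut_edges_all: "multigraph V E ends \<Longrightarrow> cut_edges E ends V = {}"
  unfolding cut_edges_def by (blast dest: multigraph_ends(1))

lemma card_ends_Int:
  assumes "multigraph V E ends" "e \<in> E"
  shows "card (ends e \<inter> S) = (if e \<in> cut_edges E ends S then 1 else if ends e \<subseteq> S then 2 else 0)"
proof -
  obtain a b where "ends e = {a,b}" "a \<noteq> b" using multigraph_ends(2)[OF assms] card_2_iff by metis
  then show ?thesis using assms(2) unfolding cut_edges_def by (cases "a \<in> S"; cases "b \<in> S"; auto)
qed

lemma sum_incident_edges: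
  fixes x :: "'e \<Rightarrow> real" assumes G: "multigraph V E ends" and "S \<subseteq> V"
  shows "(\<Sum>v\<in>S. sum x (incident_edges E ends v)) = sum x (cut_edges E ends S) + 2 * sum x {e\<in>E. ends e \<subseteq> S}"
proof -
  have fS: "finite S" and fE: "finite E"
    using assms multigraph_finite finite_subset by blast+
  have "(\<Sum>v\<in>S. sum x (incident_edges E ends v)) = (\<Sum>v\<in>S. \<Sum>e\<in>E. if v \<in> ends e then x e else 0)"
    by (simp add: incident_edges_def sum.inter_filter[OF fE])
  also have "\<dots> = (\<Sum>e\<in>E. \<Sum>v\<in>S. if v \<in> ends e then x e else 0)" by (rule sum.swap)
  also have "\<dots> = (\<Sum>e\<in>E. x e * card (ends e \<inter> S))"
    by (intro sum.cong refl) (simp add: sum.If_cases[OF fS] Int_commute)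
  also have "\<dots> = (\<Sum>e\<in>E. (if e \<in> cut_edges E ends S then x e else 0) + 2 * (if ends e \<subseteq> S then x e else 0))"
    by (intro sum.cong refl) (auto simp: card_ends_Int[OF G] cut_edges_def)
  also have "\<dots> = sum x (cut_edges E ends S) + 2 * sum x {e\<in>E. ends e \<subseteq> S}"
    by (simp add: sum.distrib sum_distrib_left[symmetric] sum.inter_filter[OF fE] cut_edges_def)
  finally show ?thesis .
qed

lemma in_pm_polytope_even_card:
  assumes "multigraph V E ends" "in_pm_polytope V E ends x" shows "even (card V)"
  using assms cut_edges_all[OF assms(1)] unfolding in_pm_polytope_def by force

section \<open>Contracting one shore of a cut\<close>

text \<open>Contraction of \<open>V - K\<close> to the single vertex \<open>r\<close>: edges lying entirely outside \<open>K\<close>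
  would become loops and are dropped.\<close>
definition contract_ends :: "'v set \<Rightarrow> 'v \<Rightarrow> ('e \<Rightarrow> 'v set) \<Rightarrow> 'e \<Rightarrow> 'v set" where
  "contract_ends K r ends e = (\<lambda>z. if z \<in> K then z else r) ` ends e"

definition contract_edges :: "'v set \<Rightarrow> 'e set \<Rightarrow> ('e \<Rightarrow> 'v set) \<Rightarrow> 'e set" where
  "contract_edges K E ends = {e\<in>E. ends e \<inter> K \<noteq> {}}"

lemma contract_edges_subset: "contract_edges K E ends \<subseteq> E"
  by (auto simp: contract_edges_def)

lemma multigraph_contract:
  assumes G: "multigraph V E ends" and K: "K \<subseteq> V" "r \<notin> K"
  shows "multigraph (insert r K) (contract_edges K E ends) (contract_ends K r ends)"
proof -
  have "contract_ends K r ends e \<subseteq> insert r K \<and> card (contract_ends K r ends e) = 2"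
    if "e \<in> contract_edges K E ends" for e
  proof -
    from that have e: "e \<in> E" "ends e \<inter> K \<noteq> {}" by (auto simp: contract_edges_def)
    then obtain a where a: "a \<in> ends e" "a \<in> K" by blast
    then obtain b where b: "ends e = {a, b}" "b \<noteq> a" using multigraph_ends_from[OF G e(1)] by metis
    let ?b = "if b \<in> K then b else r"
    have "contract_ends K r ends e = {a, ?b}" using a b by (simp add: contract_ends_def)
    moreover have "?b \<noteq> a" using a b K by auto
    ultimately show ?thesis using a K by auto
  qed
  moreover have "finite (insert r K)" "finite (contract_edges K E ends)"
    using multigraph_finite[OF G] K(1) finite_subset[OF contract_edges_subset] finite_subset by auto
  ultimately show ?thesis by (simp add: multigraph_def)
qed

lemma cut_edges_contract:
  assumes G: "multigraph V E ends" and K: "K \<subseteq> V" "r \<notin> K"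
  shows "cut_edges (contract_edges K E ends) (contract_ends K r ends) T =
    cut_edges E ends ((T \<inter> K) \<union> (if r \<in> T then V - K else {}))"
proof -
  have "ends e \<subseteq> V" if "e \<in> E" for e using multigraph_ends(1)[OF G that] .
  then show ?thesis using K unfolding cut_edges_def contract_edges_def contract_ends_def
    by (auto split: if_splits) blast+
qed

lemma incident_edges_contract:
  assumes G: "multigraph V E ends" and K: "K \<subseteq> V" "r \<in> V - K"
    and v: "v \<in> insert r K" and M: "M \<subseteq> contract_edges K E ends"
  shows "incident_edges M (contract_ends K r ends) v =
    M \<inter> (if v = r then cut_edges E ends K else incident_edges E ends v)"
proof -
  have "incident_edges M (contract_ends K r ends) v =
      M \<inter> incident_edges (contract_edges K E ends) (contract_ends K r ends) v"
    using M by (auto simp: incident_edges_def)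
  also have "incident_edges (contract_edges K E ends) (contract_ends K r ends) v =
      cut_edges E ends ({v} \<inter> K \<union> (if r \<in> {v} then V - K else {}))"
    using K by (simp add: incident_edges_eq_cut_edges[OF multigraph_contract[OF G]] cut_edges_contract[OF G])
  also have "\<dots> = (if v = r then cut_edges E ends K else incident_edges E ends v)"
    using K v by (auto simp: cut_edges_compl[OF G] incident_edges_eq_cut_edges[OF G])
  finally show ?thesis .
qed

lemma odd_card_contract_preimage:
  assumes "finite V" "K \<subseteq> V" "r \<notin> K" "T \<subseteq> insert r K" "odd (card T)" "odd (card (V - K))"
  shows "odd (card ((T \<inter> K) \<union> (if r \<in> T then V - K else {})))"
proof -
  have fK: "finite (T \<inter> K)" using assms(1,2) by (meson finite_Int finite_subset)
  have "card T = card (T \<inter> K) + (if r \<in> T then 1 else 0)"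
  proof (cases "r \<in> T")
    case True
    then have "T = insert r (T \<inter> K)" using assms(4) by blast
    then have "card T = Suc (card (T \<inter> K))" using fK assms(3) by (metis IntD2 card_insert_disjoint)
    then show ?thesis using True by simp
  next
    case False
    then have "T = T \<inter> K" using assms(4) by blast
    then show ?thesis using False by simp
  qed
  moreover have "card ((T \<inter> K) \<union> (if r \<in> T then V - K else {})) =
      card (T \<inter> K) + (if r \<in> T then card (V - K) else 0)"
    using fK assms(1) by (auto intro: card_Un_disjoint)
  ultimately show ?thesis using assms(5,6) by auto
qed

lemma in_pm_polytope_contract:
  assumes G: "multigraph V E ends" and x: "in_pm_polytope V E ends x"
    and K: "K \<subseteq> V" "r \<in> V - K" and odd: "odd (card (V - K))"
    and tight: "sum x (cut_edges E ends K) = 1"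
  shows "in_pm_polytope (insert r K) (contract_edges K E ends) (contract_ends K r ends) x"
  unfolding in_pm_polytope_def
proof (intro conjI ballI allI impI)
  fix e assume "e \<in> contract_edges K E ends"
  then show "0 \<le> x e" using x by (auto simp: in_pm_polytope_def contract_edges_def)
next
  fix v assume v: "v \<in> insert r K"
  have "contract_edges K E ends \<inter> cut_edges E ends K = cut_edges E ends K"
    "v \<in> K \<Longrightarrow> contract_edges K E ends \<inter> incident_edges E ends v = incident_edges E ends v"
    by (auto simp: contract_edges_def cut_edges_def incident_edges_def)
  then show "sum x (incident_edges (contract_edges K E ends) (contract_ends K r ends) v) = 1"
    using incident_edges_contract[OF G K v order_refl] x tight K v by (auto simp: in_pm_polytope_def)
next
  fix T assume T: "T \<subseteq> insert r K" "odd (card T)"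
  let ?preimage = "(T \<inter> K) \<union> (if r \<in> T then V - K else {})"
  have "odd (card ?preimage)"
    using odd_card_contract_preimage[OF multigraph_finite(1)[OF G] K(1) _ T odd] K by blast
  moreover have "?preimage \<subseteq> V" using K by auto
  ultimately have "1 \<le> sum x (cut_edges E ends ?preimage)" using x by (simp add: in_pm_polytope_def)
  then show "1 \<le> sum x (cut_edges (contract_edges K E ends) (contract_ends K r ends) T)"
    using cut_edges_contract[OF G K(1), of r T] K by simp
qed

section \<open>Gluing along a tight cut\<close>

text \<open>Two distributions on edge sets of \<open>E1\<close> and \<open>E2\<close>, each of whose members meets the common
  part \<open>E1 \<inter> E2\<close> in exactly one edge, are glued by conditioning both on that edge \<open>f\<close>,
  which has probability \<open>x f\<close> under either of them.\<close>
definition glue_weights ::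
    "('e set \<Rightarrow> real) \<Rightarrow> ('e set \<Rightarrow> real) \<Rightarrow> 'e set \<Rightarrow> 'e set \<Rightarrow> ('e \<Rightarrow> real) \<Rightarrow> 'e set \<Rightarrow> real" where
  "glue_weights c1 c2 E1 E2 x M = (if M \<subseteq> E1 \<union> E2 then
    (\<Sum>f\<in>E1 \<inter> E2. if M \<inter> (E1 \<inter> E2) = {f} then c1 (M \<inter> E1) * c2 (M \<inter> E2) / x f else 0) else 0)"

lemma glue_weights_commute: "glue_weights c1 c2 E1 E2 x = glue_weights c2 c1 E2 E1 x"
  unfolding glue_weights_def by (intro ext if_cong sum.cong) (auto simp: ac_simps)

lemma sum_glue_weights:
  assumes "finite E1" "finite E2"
  shows "sum (glue_weights c1 c2 E1 E2 x) {M\<in>Pow (E1 \<union> E2). Q (M \<inter> E1) \<and> R (M \<inter> E2)} =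
    (\<Sum>f\<in>E1 \<inter> E2. sum c1 {A\<in>Pow E1. Q A \<and> A \<inter> E2 = {f}} * sum c2 {B\<in>Pow E2. R B \<and> B \<inter> E1 = {f}} / x f)"
    (is "sum _ ?X = _")
proof -
  have "sum (glue_weights c1 c2 E1 E2 x) ?X =
      (\<Sum>f\<in>E1 \<inter> E2. \<Sum>M\<in>?X. if M \<inter> (E1 \<inter> E2) = {f} then c1 (M \<inter> E1) * c2 (M \<inter> E2) / x f else 0)"
    unfolding glue_weights_def by (simp add: sum.swap[of _ "E1 \<inter> E2"])
  also have "\<dots> = (\<Sum>f\<in>E1 \<inter> E2. sum c1 {A\<in>Pow E1. Q A \<and> A \<inter> E2 = {f}} * sum c2 {B\<in>Pow E2. R B \<and> B \<inter> E1 = {f}} / x f)"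
  proof (rule sum.cong[OF refl])
    fix f assume f: "f \<in> E1 \<inter> E2"
    let ?A = "{A\<in>Pow E1. Q A \<and> A \<inter> E2 = {f}}" and ?B = "{B\<in>Pow E2. R B \<and> B \<inter> E1 = {f}}"
    have "(\<Sum>M\<in>?X. if M \<inter> (E1 \<inter> E2) = {f} then c1 (M \<inter> E1) * c2 (M \<inter> E2) / x f else 0) =
        (\<Sum>M\<in>{M\<in>?X. M \<inter> (E1 \<inter> E2) = {f}}. c1 (M \<inter> E1) * c2 (M \<inter> E2) / x f)"
      using assms by (intro sum.inter_filter[symmetric]) simp
    also have "\<dots> = (\<Sum>(A, B)\<in>?A \<times> ?B. c1 A * c2 B / x f)"
    proof (rule sum.reindex_bij_witness[where i = "\<lambda>(A, B). A \<union> B" and j = "\<lambda>M. (M \<inter> E1, M \<inter> E2)"])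
      fix p assume "p \<in> ?A \<times> ?B"
      then obtain A B where p: "p = (A, B)" "A \<in> ?A" "B \<in> ?B" by blast
      then have "(A \<union> B) \<inter> E1 = A" "(A \<union> B) \<inter> E2 = B" by auto
      with p show "(\<lambda>M. (M \<inter> E1, M \<inter> E2)) ((\<lambda>(A, B). A \<union> B) p) = p"
        and "(\<lambda>(A, B). A \<union> B) p \<in> {M\<in>?X. M \<inter> (E1 \<inter> E2) = {f}}" by auto
    qed auto
    also have "\<dots> = sum c1 ?A * sum c2 ?B / x f"
      by (simp add: sum_product sum.cartesian_product sum_divide_distrib case_prod_beta)
    finally show "(\<Sum>M\<in>?X. if M \<inter> (E1 \<inter> E2) = {f} then c1 (M \<inter> E1) * c2 (M \<inter> E2) / x f else 0) =
        sum c1 ?A * sum c2 ?B / x f" .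
  qed
  finally show ?thesis .
qed

lemma glue_weights_nonzero:
  assumes "glue_weights c1 c2 E1 E2 x M \<noteq> 0"
  shows "M \<subseteq> E1 \<union> E2" "c1 (M \<inter> E1) \<noteq> 0" "c2 (M \<inter> E2) \<noteq> 0"
proof -
  show "M \<subseteq> E1 \<union> E2" using assms by (auto simp: glue_weights_def split: if_splits)
  then have "(\<Sum>f\<in>E1 \<inter> E2. if M \<inter> (E1 \<inter> E2) = {f} then c1 (M \<inter> E1) * c2 (M \<inter> E2) / x f else 0) \<noteq> 0"
    using assms by (simp add: glue_weights_def)
  then obtain f where "(if M \<inter> (E1 \<inter> E2) = {f} then c1 (M \<inter> E1) * c2 (M \<inter> E2) / x f else 0) \<noteq> 0"
    by (rule sum.not_neutral_contains_not_neutral)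
  then show "c1 (M \<inter> E1) \<noteq> 0" "c2 (M \<inter> E2) \<noteq> 0" by (auto split: if_splits)
qed

lemma sum_filter_cong_support:
  assumes "finite X" "\<And>A. A \<in> X \<Longrightarrow> g A \<noteq> 0 \<Longrightarrow> P A \<longleftrightarrow> Q A"
  shows "sum g {A\<in>X. P A} = sum g {A\<in>X. Q A}"
proof -
  have "(\<Sum>A\<in>X. if P A then g A else 0) = (\<Sum>A\<in>X. if Q A then g A else 0)"
    by (rule sum.cong[OF refl]) (use assms(2) in auto)
  then show ?thesis by (simp add: sum.inter_filter[OF assms(1)])
qed

lemma sum_over_singleton_fibres:
  assumes "finite X" "finite C" "\<And>A. A \<in> X \<Longrightarrow> g A \<noteq> 0 \<Longrightarrow> \<exists>f\<in>C. h A = {f}"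
  shows "(\<Sum>f\<in>C. sum g {A\<in>X. h A = {f}}) = sum g X"
proof -
  have "(\<Sum>f\<in>C. sum g {A\<in>X. h A = {f}}) = (\<Sum>A\<in>X. \<Sum>f\<in>C. if h A = {f} then g A else 0)"
    by (simp add: sum.inter_filter[OF assms(1)] sum.swap[of _ C])
  also have "\<dots> = sum g X"
  proof (rule sum.cong[OF refl])
    fix A assume A: "A \<in> X"
    show "(\<Sum>f\<in>C. if h A = {f} then g A else 0) = g A"
    proof (cases "g A = 0")
      case False
      then obtain f where f: "f \<in> C" "h A = {f}" using assms(3) A by blast
      then have "(\<Sum>f'\<in>C. if h A = {f'} then g A else 0) = (\<Sum>f'\<in>C. if f' = f then g A else 0)"
        by (intro sum.cong) auto
      then show ?thesis using f assms(2) by simp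
    qed (simp cong: if_cong)
  qed
  finally show ?thesis .
qed

lemma sum_glue_weights_left:
  assumes fin: "finite E1" "finite E2"
    and u1: "\<And>A. A \<subseteq> E1 \<Longrightarrow> c1 A \<noteq> 0 \<Longrightarrow> \<exists>f\<in>E1 \<inter> E2. A \<inter> E2 = {f}"
    and u2: "\<And>B. B \<subseteq> E2 \<Longrightarrow> c2 B \<noteq> 0 \<Longrightarrow> \<exists>f\<in>E1 \<inter> E2. B \<inter> E1 = {f}"
    and m2: "\<And>f. f \<in> E1 \<inter> E2 \<Longrightarrow> sum c2 {B\<in>Pow E2. f \<in> B} = x f"
    and pos: "\<And>f. f \<in> E1 \<inter> E2 \<Longrightarrow> 0 < x f"
  shows "sum (glue_weights c1 c2 E1 E2 x) {M\<in>Pow (E1 \<union> E2). P (M \<inter> E1)} = sum c1 {A\<in>Pow E1. P A}"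
proof -
  have c2f: "sum c2 {B\<in>Pow E2. True \<and> B \<inter> E1 = {f}} = x f" if f: "f \<in> E1 \<inter> E2" for f
  proof -
    have "sum c2 {B\<in>Pow E2. True \<and> B \<inter> E1 = {f}} = sum c2 {B\<in>Pow E2. f \<in> B}"
    proof (rule sum_filter_cong_support)
      fix B assume "B \<in> Pow E2" "c2 B \<noteq> 0"
      then obtain f' where "B \<inter> E1 = {f'}" using u2 by blast
      then show "True \<and> B \<inter> E1 = {f} \<longleftrightarrow> f \<in> B" using f by auto
    qed (use fin in simp)
    then show ?thesis using m2 f by simp
  qed
  have "sum (glue_weights c1 c2 E1 E2 x) {M\<in>Pow (E1 \<union> E2). P (M \<inter> E1)} =
      sum (glue_weights c1 c2 E1 E2 x) {M\<in>Pow (E1 \<union> E2). P (M \<inter> E1) \<and> True}" by simp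
  also have "\<dots> = (\<Sum>f\<in>E1 \<inter> E2. sum c1 {A\<in>Pow E1. P A \<and> A \<inter> E2 = {f}} *
      sum c2 {B\<in>Pow E2. True \<and> B \<inter> E1 = {f}} / x f)"
    by (rule sum_glue_weights[OF fin])
  also have "\<dots> = (\<Sum>f\<in>E1 \<inter> E2. sum c1 {A\<in>Pow E1. P A \<and> A \<inter> E2 = {f}})"
    using c2f pos by (intro sum.cong refl) (simp add: less_imp_neq[symmetric])
  also have "\<dots> = (\<Sum>f\<in>E1 \<inter> E2. sum c1 {A\<in>{A\<in>Pow E1. P A}. A \<inter> E2 = {f}})"
    by (intro sum.cong arg_cong[where f = "sum c1"]) auto
  also have "\<dots> = sum c1 {A\<in>Pow E1. P A}"
    using fin u1 by (intro sum_over_singleton_fibres) auto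
  finally show ?thesis .
qed

lemma contract_edges_shores:
  assumes G: "multigraph V E ends" and S: "S \<subseteq> V"
  shows "contract_edges S E ends \<union> contract_edges (V - S) E ends = E"
    "contract_edges S E ends \<inter> contract_edges (V - S) E ends = cut_edges E ends S"
proof -
  have "ends e \<subseteq> V" "ends e \<noteq> {}" if "e \<in> E" for e
    using multigraph_ends[OF G that] by auto
  then show "contract_edges S E ends \<union> contract_edges (V - S) E ends = E"
    "contract_edges S E ends \<inter> contract_edges (V - S) E ends = cut_edges E ends S"
    unfolding contract_edges_def cut_edges_def by blast+
qed

lemma perfect_matching_contract_meets_cut:
  assumes G: "multigraph V E ends" and S: "S \<subseteq> V" "r \<in> V - S"
    and M: "perfect_matching (insert r S) (contract_edges S E ends) (contract_ends S r ends) M"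
  shows "\<exists>f\<in>cut_edges E ends S. M \<inter> contract_edges (V - S) E ends = {f}"
proof -
  have "M \<subseteq> contract_edges S E ends" "card (incident_edges M (contract_ends S r ends) r) = 1"
    using M by (auto simp: perfect_matching_def)
  moreover from this(1) have "M \<inter> contract_edges (V - S) E ends = M \<inter> cut_edges E ends S"
    using contract_edges_shores(2)[OF G S(1)] by blast
  ultimately have "card (M \<inter> contract_edges (V - S) E ends) = 1"
    using incident_edges_contract[OF G S] by simp
  then obtain f where "M \<inter> contract_edges (V - S) E ends = {f}" by (meson card_1_singletonE)
  moreover from this have "f \<in> cut_edges E ends S"
    using contract_edges_shores(2)[OF G S(1)] \<open>M \<subseteq> contract_edges S E ends\<close> by blast
  ultimately show ?thesis by blast
qed

lemma incident_edges_contract_inside: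
  assumes G: "multigraph V E ends" and K: "K \<subseteq> V" "r \<in> V - K" and "v \<in> K" "M \<subseteq> E"
  shows "incident_edges (M \<inter> contract_edges K E ends) (contract_ends K r ends) v = incident_edges M ends v"
proof -
  have "v \<noteq> r" using K assms(4) by blast
  then have "incident_edges (M \<inter> contract_edges K E ends) (contract_ends K r ends) v =
      M \<inter> contract_edges K E ends \<inter> incident_edges E ends v"
    using incident_edges_contract[OF G K _ Int_lower2] assms(4) by simp
  then show ?thesis using assms(4,5) by (auto simp: incident_edges_def contract_edges_def)
qed

lemma perfect_matching_glue:
  assumes G: "multigraph V E ends" and S: "S \<subseteq> V" "r1 \<in> V - S" "r2 \<in> S" and "M \<subseteq> E"
    and M1: "perfect_matching (insert r1 S) (contract_edges S E ends) (contract_ends S r1 ends)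
      (M \<inter> contract_edges S E ends)"
    and M2: "perfect_matching (insert r2 (V - S)) (contract_edges (V - S) E ends) (contract_ends (V - S) r2 ends)
      (M \<inter> contract_edges (V - S) E ends)"
  shows "perfect_matching V E ends M"
proof -
  have S': "V - S \<subseteq> V" "r2 \<in> V - (V - S)" using S by auto
  have "card (incident_edges M ends v) = 1" if v: "v \<in> V" for v
  proof (cases "v \<in> S")
    case True
    then show ?thesis using M1 incident_edges_contract_inside[OF G S(1,2) True \<open>M \<subseteq> E\<close>]
      unfolding perfect_matching_def by auto
  next
    case False
    then have "v \<in> V - S" using v by blast
    then show ?thesis using M2 incident_edges_contract_inside[OF G S' _ \<open>M \<subseteq> E\<close>]
      unfolding perfect_matching_def by auto
  qed
  then show ?thesis using \<open>M \<subseteq> E\<close> by (simp add: perfect_matching_def)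
qed

lemma in_pm_hull_glue:
  assumes G: "multigraph V E ends" and pos: "\<forall>e\<in>cut_edges E ends S. 0 < x e"
    and S: "S \<subseteq> V" "r1 \<in> V - S" "r2 \<in> S"
    and H1: "in_pm_hull (insert r1 S) (contract_edges S E ends) (contract_ends S r1 ends) x"
    and H2: "in_pm_hull (insert r2 (V - S)) (contract_edges (V - S) E ends) (contract_ends (V - S) r2 ends) x"
  shows "in_pm_hull V E ends x"
proof -
  define E1 where "E1 = contract_edges S E ends"
  define E2 where "E2 = contract_edges (V - S) E ends"
  have S': "V - S \<subseteq> V" "r2 \<in> V - (V - S)" using S by auto
  have fin: "finite E1" "finite E2"
    using multigraph_finite(2)[OF G] by (auto simp: E1_def E2_def contract_edges_def)
  have EU: "E1 \<union> E2 = E" and CI: "E1 \<inter> E2 = cut_edges E ends S"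
    using contract_edges_shores[OF G S(1)] by (simp_all add: E1_def E2_def)
  obtain c1 where c1: "\<forall>M. 0 \<le> c1 M" "\<forall>M. c1 M \<noteq> 0 \<longrightarrow> perfect_matching (insert r1 S) E1 (contract_ends S r1 ends) M"
    "sum c1 (Pow E1) = 1" "\<forall>e\<in>E1. sum c1 {M\<in>Pow E1. e \<in> M} = x e"
    using H1 unfolding in_pm_hull_def E1_def by blast
  obtain c2 where c2: "\<forall>M. 0 \<le> c2 M" "\<forall>M. c2 M \<noteq> 0 \<longrightarrow> perfect_matching (insert r2 (V - S)) E2 (contract_ends (V - S) r2 ends) M"
    "sum c2 (Pow E2) = 1" "\<forall>e\<in>E2. sum c2 {M\<in>Pow E2. e \<in> M} = x e"
    using H2 unfolding in_pm_hull_def E2_def by blast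
  have pos': "\<And>f. f \<in> E1 \<inter> E2 \<Longrightarrow> 0 < x f" using pos CI by blast
  have VVS: "V - (V - S) = S" using S(1) by blast
  have u1: "\<exists>f\<in>E1 \<inter> E2. A \<inter> E2 = {f}" if "c1 A \<noteq> 0" for A
    using perfect_matching_contract_meets_cut[OF G S(1,2)] c1(2) that CI unfolding E1_def E2_def by blast
  have u2: "\<exists>f\<in>E1 \<inter> E2. B \<inter> E1 = {f}" if "c2 B \<noteq> 0" for B
    using perfect_matching_contract_meets_cut[OF G S'] c2(2) that CI cut_edges_compl[OF G S(1)]
    unfolding E1_def E2_def VVS by blast
  define c where "c = glue_weights c1 c2 E1 E2 x"
  have marg: "sum c {M\<in>Pow E. P (M \<inter> E1)} = sum c1 {A\<in>Pow E1. P A}" for P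
    unfolding c_def EU[symmetric] using fin u1 u2 c2(4) pos' by (intro sum_glue_weights_left) auto
  have marg': "sum c {M\<in>Pow E. P (M \<inter> E2)} = sum c2 {B\<in>Pow E2. P B}" for P
    unfolding c_def glue_weights_commute[of c1 c2 E1 E2 x] EU[symmetric] Un_commute[of E1]
    using fin u1 u2 c1(4) pos' by (intro sum_glue_weights_left) (auto simp: Int_commute)
  show ?thesis unfolding in_pm_hull_def
  proof (intro exI[of _ c] conjI allI impI ballI)
    show "0 \<le> c M" for M
      using c1(1) c2(1) pos unfolding c_def glue_weights_def CI
      by (auto intro!: sum_nonneg divide_nonneg_pos)
    show "perfect_matching V E ends M" if "c M \<noteq> 0" for M
    proof -
      note nz = glue_weights_nonzero[OF that[unfolded c_def]]
      show ?thesis using c1(2) nz(2) c2(2) nz(3) nz(1) EU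
        by (intro perfect_matching_glue[OF G S]) (auto simp: E1_def E2_def)
    qed
    show "sum c (Pow E) = 1" using marg[of "\<lambda>_. True"] c1(3) by (simp add: Pow_def)
    show "sum c {M\<in>Pow E. e \<in> M} = x e" if "e \<in> E" for e
    proof (cases "e \<in> E1")
      case True
      then show ?thesis using marg[of "\<lambda>A. e \<in> A"] c1(4) by simp
    next
      case False
      then show ?thesis using that EU marg'[of "\<lambda>B. e \<in> B"] c2(4) by auto
    qed
  qed
qed

lemma in_pm_hull_empty: "multigraph {} E ends \<Longrightarrow> in_pm_hull {} E ends x"
  unfolding multigraph_def in_pm_hull_def
  by (rule exI[of _ "\<lambda>M. if M = {} then 1 else 0"]) (force simp: perfect_matching_def)

lemma in_pm_hull_convex:
  assumes H1: "in_pm_hull V E ends x1" and H2: "in_pm_hull V E ends x2" and l: "0 \<le> l" "l \<le> 1"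
    and x: "\<forall>e\<in>E. x e = l * x1 e + (1 - l) * x2 e"
  shows "in_pm_hull V E ends x"
proof -
  obtain c1 where c1: "\<forall>M. 0 \<le> c1 M" "\<forall>M. c1 M \<noteq> 0 \<longrightarrow> perfect_matching V E ends M"
    "sum c1 (Pow E) = 1" "\<forall>e\<in>E. sum c1 {M\<in>Pow E. e \<in> M} = x1 e"
    using H1 unfolding in_pm_hull_def by blast
  obtain c2 where c2: "\<forall>M. 0 \<le> c2 M" "\<forall>M. c2 M \<noteq> 0 \<longrightarrow> perfect_matching V E ends M"
    "sum c2 (Pow E) = 1" "\<forall>e\<in>E. sum c2 {M\<in>Pow E. e \<in> M} = x2 e"
    using H2 unfolding in_pm_hull_def by blast
  show ?thesis unfolding in_pm_hull_def
  proof (intro exI[of _ "\<lambda>M. l * c1 M + (1 - l) * c2 M"] conjI allI impI ballI)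
    show "0 \<le> l * c1 M + (1 - l) * c2 M" for M using c1(1) c2(1) l by simp
    show "perfect_matching V E ends M" if "l * c1 M + (1 - l) * c2 M \<noteq> 0" for M
      using that c1(2) c2(2) by (metis add.right_neutral mult_zero_right)
    show "(\<Sum>M\<in>Pow E. l * c1 M + (1 - l) * c2 M) = 1"
      using c1(3) c2(3) by (simp add: sum.distrib sum_distrib_left[symmetric])
    show "(\<Sum>M\<in>{M\<in>Pow E. e \<in> M}. l * c1 M + (1 - l) * c2 M) = x e" if "e \<in> E" for e
      using c1(4) c2(4) x that by (simp add: sum.distrib sum_distrib_left[symmetric])
  qed
qed

lemma multigraph_Diff_edge: "multigraph V E ends \<Longrightarrow> multigraph V (E - {e0}) ends"
  by (auto simp: multigraph_def)

lemma in_pm_polytope_Diff_zero_edge: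
  assumes "finite E" "in_pm_polytope V E ends x" "x e0 = 0"
  shows "in_pm_polytope V (E - {e0}) ends x"
proof -
  have "sum x (A - {e0}) = sum x A" if "A \<subseteq> E" for A
    using that assms(1,3) by (metis finite_subset sum_diff1 diff_zero)
  moreover have "incident_edges (E - {e0}) ends v = incident_edges E ends v - {e0}"
    "cut_edges (E - {e0}) ends S = cut_edges E ends S - {e0}" for v S
    by (auto simp: incident_edges_def cut_edges_def)
  ultimately show ?thesis using assms(2)
    by (simp add: in_pm_polytope_def incident_edges_def cut_edges_def)
qed

lemma in_pm_hull_insert_zero_edge:
  assumes "finite E" "x e0 = 0" and H: "in_pm_hull V (E - {e0}) ends x"
  shows "in_pm_hull V E ends x"
proof -
  obtain c where c: "\<forall>M. 0 \<le> c M" "\<forall>M. c M \<noteq> 0 \<longrightarrow> perfect_matching V (E - {e0}) ends M"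
    "sum c (Pow (E - {e0})) = 1" "\<forall>e\<in>E - {e0}. sum c {M\<in>Pow (E - {e0}). e \<in> M} = x e"
    using H unfolding in_pm_hull_def by blast
  have zero: "c M = 0" if "e0 \<in> M" for M using c(2) that by (auto simp: perfect_matching_def)
  have restrict: "sum c {M\<in>Pow E. P M} = sum c {M\<in>Pow (E - {e0}). P M}" for P
    by (rule sum.mono_neutral_right) (use assms(1) zero in auto)
  show ?thesis unfolding in_pm_hull_def
  proof (intro exI[of _ c] conjI allI impI ballI)
    show "0 \<le> c M" "c M \<noteq> 0 \<Longrightarrow> perfect_matching V E ends M" for M
      using c(1,2) by (auto simp: perfect_matching_def)
    show "sum c (Pow E) = 1" using restrict[of "\<lambda>_. True"] c(3) by (simp add: Pow_def)
    show "sum c {M\<in>Pow E. e \<in> M} = x e" if "e \<in> E" for e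
    proof (cases "e = e0")
      case True
      then show ?thesis using zero assms(2) by (simp add: sum.neutral)
    qed (use restrict c(4) that in auto)
  qed
qed

lemma multigraph_Diff_isolated_edge:
  assumes "multigraph V E ends" "incident_edges E ends u = {e0}" "incident_edges E ends v = {e0}"
  shows "multigraph (V - {u, v}) (E - {e0}) ends"
proof -
  have "u \<notin> ends e" "v \<notin> ends e" if "e \<in> E - {e0}" for e
    using assms(2,3) that by (auto simp: incident_edges_def)
  then show ?thesis using assms(1) unfolding multigraph_def by blast
qed

lemma in_pm_polytope_Diff_isolated_edge:
  assumes x: "in_pm_polytope V E ends x" and e0: "ends e0 = {u, v}"
    and iu: "incident_edges E ends u = {e0}" and iv: "incident_edges E ends v = {e0}"
  shows "in_pm_polytope (V - {u, v}) (E - {e0}) ends x"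
  unfolding in_pm_polytope_def
proof (intro conjI ballI allI impI)
  show "0 \<le> x e" if "e \<in> E - {e0}" for e using x that by (auto simp: in_pm_polytope_def)
  show "sum x (incident_edges (E - {e0}) ends w) = 1" if "w \<in> V - {u, v}" for w
  proof -
    have "incident_edges (E - {e0}) ends w = incident_edges E ends w"
      using that e0 by (auto simp: incident_edges_def)
    then show ?thesis using x that by (auto simp: in_pm_polytope_def)
  qed
  show "1 \<le> sum x (cut_edges (E - {e0}) ends S)" if S: "S \<subseteq> V - {u, v}" "odd (card S)" for S
  proof -
    have "cut_edges (E - {e0}) ends S = cut_edges E ends S" using S e0 by (auto simp: cut_edges_def)
    then show ?thesis using x S by (auto simp: in_pm_polytope_def)
  qed
qed

lemma in_pm_hull_insert_isolated_edge:
  assumes fE: "finite E" and e0: "e0 \<in> E" "ends e0 = {u, v}" and "x e0 = 1"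
    and iu: "incident_edges E ends u = {e0}" and iv: "incident_edges E ends v = {e0}"
    and H: "in_pm_hull (V - {u, v}) (E - {e0}) ends x"
  shows "in_pm_hull V E ends x"
proof -
  obtain c where c: "\<forall>M. 0 \<le> c M" "\<forall>M. c M \<noteq> 0 \<longrightarrow> perfect_matching (V - {u, v}) (E - {e0}) ends M"
    "sum c (Pow (E - {e0})) = 1" "\<forall>e\<in>E - {e0}. sum c {M\<in>Pow (E - {e0}). e \<in> M} = x e"
    using H unfolding in_pm_hull_def by blast
  define c' where "c' M = (if e0 \<in> M then c (M - {e0}) else 0)" for M
  have lift: "sum c' {M\<in>Pow E. P M} = sum c {M\<in>Pow (E - {e0}). P (insert e0 M)}" for P
  proof -
    have "sum c' {M\<in>Pow E. P M} = sum (\<lambda>M. c (M - {e0})) {M\<in>Pow E. e0 \<in> M \<and> P M}"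
      unfolding c'_def by (rule sum.mono_neutral_cong_right) (use fE in auto)
    also have "\<dots> = sum c {M\<in>Pow (E - {e0}). P (insert e0 M)}"
      by (rule sum.reindex_bij_witness[where i = "insert e0" and j = "\<lambda>M. M - {e0}"])
        (use e0(1) in \<open>auto simp: insert_absorb\<close>)
    finally show ?thesis .
  qed
  show ?thesis unfolding in_pm_hull_def
  proof (intro exI[of _ c'] conjI allI impI ballI)
    show "0 \<le> c' M" for M using c(1) by (simp add: c'_def)
    show "perfect_matching V E ends M" if "c' M \<noteq> 0" for M
    proof -
      have M: "e0 \<in> M" "perfect_matching (V - {u, v}) (E - {e0}) ends (M - {e0})"
        using that c(2) by (auto simp: c'_def split: if_splits)
      then have ME: "M \<subseteq> E" using e0 by (auto simp: perfect_matching_def)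
      have "card (incident_edges M ends w) = 1" if w: "w \<in> V" for w
      proof (cases "w \<in> {u, v}")
        case True
        then have "incident_edges M ends w = {e0}" using ME M(1) iu iv by (auto simp: incident_edges_def)
        then show ?thesis by simp
      next
        case False
        then have "incident_edges M ends w = incident_edges (M - {e0}) ends w"
          using e0 by (auto simp: incident_edges_def)
        then show ?thesis using M(2) w False by (auto simp: perfect_matching_def)
      qed
      with ME show ?thesis by (simp add: perfect_matching_def)
    qed
    show "sum c' (Pow E) = 1" using lift[of "\<lambda>_. True"] c(3) by (simp add: Pow_def)
    show "sum c' {M\<in>Pow E. e \<in> M} = x e" if "e \<in> E" for e
      using lift[of "\<lambda>M. e \<in> M"] c(3,4) that assms(4) by (cases "e = e0") (auto simp: Pow_def)
  qed
qed

section \<open>Kernel vectors of the incidence matrix\<close>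

lemma homogeneous_system_nontrivial_solution:
  fixes A :: "'v \<Rightarrow> 'e \<Rightarrow> real"
  assumes "finite V" "finite E" "card V < card E"
  shows "\<exists>y. (\<exists>e\<in>E. y e \<noteq> 0) \<and> (\<forall>v\<in>V. (\<Sum>e\<in>E. A v e * y e) = 0)"
  using assms
proof (induction V arbitrary: E A rule: finite_induct)
  case empty
  then obtain e0 where "e0 \<in> E" by fastforce
  then show ?case by (intro exI[of _ "\<lambda>e. if e = e0 then 1 else 0"]) auto
next
  case (insert v V)
  show ?case
  proof (cases "\<forall>e\<in>E. A v e = 0")
    case True
    then show ?thesis using insert.IH[of E A] insert.prems insert.hyps by auto
  next
    case False
    then obtain e0 where e0: "e0 \<in> E" "A v e0 \<noteq> 0" by blast
    \<comment> \<open>Gaussian elimination of the unknown \<open>y e0\<close> using the equation of \<open>v\<close>.\<close>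
    define A' where "A' w e = A w e - A w e0 * A v e / A v e0" for w e
    have "card V < card (E - {e0})" using insert e0 by (simp add: card_Diff_singleton)
    then obtain y' where y': "\<exists>e\<in>E - {e0}. y' e \<noteq> 0" "\<forall>w\<in>V. (\<Sum>e\<in>E - {e0}. A' w e * y' e) = 0"
      using insert.IH[of "E - {e0}" A'] insert.prems by auto
    define s where "s = (\<Sum>e\<in>E - {e0}. A v e * y' e)"
    define y where "y e = (if e = e0 then - s / A v e0 else y' e)" for e
    have split: "(\<Sum>e\<in>E. A w e * y e) = A w e0 * y e0 + (\<Sum>e\<in>E - {e0}. A w e * y' e)" for w
    proof -
      have "(\<Sum>e\<in>E - {e0}. A w e * y e) = (\<Sum>e\<in>E - {e0}. A w e * y' e)"
        by (rule sum.cong) (auto simp: y_def)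
      then show ?thesis using e0(1) insert.prems(1) by (simp add: sum.remove)
    qed
    show ?thesis
    proof (intro exI[of _ y] conjI ballI)
      show "\<exists>e\<in>E. y e \<noteq> 0" using y' by (auto simp: y_def)
      fix w assume w: "w \<in> insert v V"
      show "(\<Sum>e\<in>E. A w e * y e) = 0"
      proof (cases "w = v")
        case False
        then have wV: "w \<in> V" using w by blast
        have "(\<Sum>e\<in>E - {e0}. A' w e * y' e) = (\<Sum>e\<in>E - {e0}. A w e * y' e) - A w e0 / A v e0 * s"
          by (simp add: A'_def s_def left_diff_distrib sum_subtractf sum_distrib_left mult.assoc)
        then show ?thesis unfolding split using y'(2) wV e0 by (simp add: y_def)
      qed (unfold split, use e0 in \<open>simp add: y_def s_def\<close>)
    qed
  qed
qed

definition incidence_kernel :: "'v set \<Rightarrow> 'e set \<Rightarrow> ('e \<Rightarrow> 'v set) \<Rightarrow> ('e \<Rightarrow> real) \<Rightarrow> bool" where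
  "incidence_kernel V E ends y \<longleftrightarrow> (\<forall>v\<in>V. sum y (incident_edges E ends v) = 0)"

lemma incidence_kernel_uminus: "incidence_kernel V E ends y \<Longrightarrow> incidence_kernel V E ends (\<lambda>e. - y e)"
  by (simp add: incidence_kernel_def sum_negf)

lemma incidence_kernel_parallel_edges:
  assumes "finite E" "e1 \<in> E" "e2 \<in> E" "e1 \<noteq> e2" "ends e1 = ends e2"
  shows "incidence_kernel V E ends (\<lambda>e. if e = e1 then 1 else if e = e2 then -1 else 0)"
  unfolding incidence_kernel_def
proof
  fix v
  let ?y = "\<lambda>e. if e = e1 then 1 else if e = e2 then -1 else (0::real)"
  have "sum ?y (incident_edges E ends v) = sum ?y (incident_edges E ends v \<inter> {e1, e2})"
    using assms(1) by (intro sum.mono_neutral_right) (auto simp: incident_edges_def)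
  also have "incident_edges E ends v \<inter> {e1, e2} = (if v \<in> ends e1 then {e1, e2} else {})"
    using assms(2-5) by (auto simp: incident_edges_def)
  finally show "sum ?y (incident_edges E ends v) = 0" using assms(4) by simp
qed

lemma card_vertices_less_card_edges:
  assumes G: "multigraph V E ends" and "V \<noteq> {}" and deg: "\<forall>v\<in>V. 3 \<le> card (incident_edges E ends v)"
  shows "card V < card E"
proof -
  have "{e\<in>E. ends e \<subseteq> V} = E" using multigraph_ends(1)[OF G] by blast
  then have "(\<Sum>v\<in>V. real (card (incident_edges E ends v))) = 2 * real (card E)"
    using sum_incident_edges[OF G order_refl, of "\<lambda>_. 1"] cut_edges_all[OF G] by simp
  moreover have "(\<Sum>v\<in>V. 3) \<le> (\<Sum>v\<in>V. real (card (incident_edges E ends v)))"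
    by (rule sum_mono) (use deg in auto)
  moreover have "0 < card V" using assms(2) multigraph_finite(1)[OF G] by (simp add: card_gt_0_iff)
  ultimately show ?thesis by simp
qed

lemma incidence_kernel_nonzero_exists:
  assumes G: "multigraph V E ends" and "card V < card E"
  obtains y where "incidence_kernel V E ends y" "\<exists>e\<in>E. y e \<noteq> 0"
proof -
  obtain y where y: "\<exists>e\<in>E. y e \<noteq> 0" "\<forall>v\<in>V. (\<Sum>e\<in>E. (if v \<in> ends e then 1 else (0::real)) * y e) = 0"
    using homogeneous_system_nontrivial_solution[OF multigraph_finite[OF G] assms(2),
        of "\<lambda>v e. if v \<in> ends e then 1 else 0"] by blast
  have "sum y (incident_edges E ends v) = (\<Sum>e\<in>E. (if v \<in> ends e then 1 else 0) * y e)" for v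
    unfolding incident_edges_def using multigraph_finite(2)[OF G]
    by (simp add: sum.inter_filter) (intro sum.cong; simp)
  then have "incidence_kernel V E ends y" using y(2) by (simp add: incidence_kernel_def)
  then show ?thesis using that y(1) by blast
qed

lemma incidence_kernel_exists:
  assumes G: "multigraph V E ends" and "V \<noteq> {}"
    and deg: "\<forall>v\<in>V. 2 \<le> card (incident_edges E ends v)"
    and no_deg2: "\<not> (\<exists>v\<in>V. \<exists>e1 e2. incident_edges E ends v = {e1, e2} \<and> e1 \<noteq> e2 \<and> ends e1 \<noteq> ends e2)"
  obtains y where "incidence_kernel V E ends y" "\<exists>e\<in>E. y e \<noteq> 0"
proof (cases "\<exists>e1\<in>E. \<exists>e2\<in>E. e1 \<noteq> e2 \<and> ends e1 = ends e2")
  case True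
  then obtain e1 e2 where e: "e1 \<in> E" "e2 \<in> E" "e1 \<noteq> e2" "ends e1 = ends e2" by blast
  show ?thesis
  proof (rule that)
    show "incidence_kernel V E ends (\<lambda>e. if e = e1 then 1 else if e = e2 then -1 else 0)"
      by (rule incidence_kernel_parallel_edges[OF multigraph_finite(2)[OF G] e])
  qed (use e in auto)
next
  case False
  have "3 \<le> card (incident_edges E ends v)" if v: "v \<in> V" for v
  proof -
    have "card (incident_edges E ends v) \<noteq> 2"
    proof
      assume "card (incident_edges E ends v) = 2"
      then obtain e1 e2 where "incident_edges E ends v = {e1, e2}" "e1 \<noteq> e2" by (meson card_2_iff)
      moreover from this have "e1 \<in> E" "e2 \<in> E" by (auto simp: incident_edges_def)
      ultimately show False using False no_deg2 v by blast
    qed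
    then show ?thesis using deg v by (metis Suc_leI le_neq_implies_less numeral_2_eq_2 numeral_3_eq_3)
  qed
  then have "card V < card E" using card_vertices_less_card_edges[OF G \<open>V \<noteq> {}\<close>] by blast
  then show ?thesis using incidence_kernel_nonzero_exists[OF G] that by blast
qed

lemma incidence_kernel_negative_entry:
  assumes G: "multigraph V E ends" and y: "incidence_kernel V E ends y" and e: "e \<in> E" "y e \<noteq> 0"
  obtains e' where "e' \<in> E" "y e' < 0"
proof (rule ccontr)
  assume "\<not> thesis"
  then have nonneg: "\<forall>e'\<in>E. 0 \<le> y e'" using that by force
  obtain v where v: "v \<in> ends e" using multigraph_ends(2)[OF G e(1)] by fastforce
  have "0 < sum y (incident_edges E ends v)"
    using multigraph_finite(2)[OF G] e v nonneg
    by (intro sum_pos2[of _ e]) (auto simp: incident_edges_def order_less_le)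
  moreover have "v \<in> V" using multigraph_ends(1)[OF G e(1)] v by blast
  ultimately show False using y by (simp add: incidence_kernel_def)
qed

section \<open>Moving along a kernel vector\<close>

lemma ratio_test:
  fixes a b :: "'i \<Rightarrow> real"
  assumes "finite I" "I \<noteq> {}" "\<And>i. i \<in> I \<Longrightarrow> 0 < a i" "\<And>i. i \<in> I \<Longrightarrow> b i < 0"
  obtains t where "0 < t" "\<And>i. i \<in> I \<Longrightarrow> 0 \<le> a i + t * b i" "\<exists>i\<in>I. a i + t * b i = 0"
proof -
  define t where "t = Min ((\<lambda>i. a i / - b i) ` I)"
  have le: "t \<le> a i / - b i" if "i \<in> I" for i
    unfolding t_def using assms(1) that by (intro Min_le) auto
  have "t \<in> (\<lambda>i. a i / - b i) ` I" unfolding t_def using assms(1,2) by (intro Min_in) auto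
  then obtain i0 where i0: "i0 \<in> I" "t = a i0 / - b i0" by blast
  show ?thesis
  proof
    show "0 < t" using i0 assms(3,4)[OF i0(1)] by (simp add: divide_pos_neg)
    show "0 \<le> a i + t * b i" if "i \<in> I" for i
    proof -
      have "0 < - b i" using assms(4)[OF that] by simp
      then have "t * - b i \<le> a i" using pos_le_divide_eq[of "- b i" t "a i"] le[OF that] by blast
      then show ?thesis by simp
    qed
    have "a i0 + t * b i0 = 0" using i0(2) assms(4)[OF i0(1)] by simp
    then show "\<exists>i\<in>I. a i + t * b i = 0" using i0(1) by blast
  qed
qed

definition nontrivial_odd_set :: "'v set \<Rightarrow> 'v set \<Rightarrow> bool" where
  "nontrivial_odd_set V S \<longleftrightarrow> S \<subseteq> V \<and> odd (card S) \<and> 2 \<le> card S \<and> 2 \<le> card (V - S)"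

text \<open>In either case the problem splits into smaller ones.\<close>
definition pm_reducible :: "'v set \<Rightarrow> 'e set \<Rightarrow> ('e \<Rightarrow> 'v set) \<Rightarrow> ('e \<Rightarrow> real) \<Rightarrow> bool" where
  "pm_reducible V E ends x \<longleftrightarrow>
     (\<exists>e\<in>E. x e = 0) \<or> (\<exists>S. nontrivial_odd_set V S \<and> sum x (cut_edges E ends S) = 1)"

lemma incidence_kernel_trivial_odd_cut:
  assumes G: "multigraph V E ends" and y: "incidence_kernel V E ends y"
    and S: "S \<subseteq> V" "odd (card S)" "\<not> nontrivial_odd_set V S"
  shows "sum y (cut_edges E ends S) = 0"
proof -
  consider "card S = 1" | "card (V - S) = 1" | "card (V - S) = 0"
    using S unfolding nontrivial_odd_set_def by (metis One_nat_def card.empty dvd_0_right less_2_cases not_le)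
  then show ?thesis
  proof cases
    case 1
    then obtain v where "S = {v}" by (meson card_1_singletonE)
    then show ?thesis using y S incident_edges_eq_cut_edges[OF G, of v] by (auto simp: incidence_kernel_def)
  next
    case 2
    then obtain v where v: "V - S = {v}" by (meson card_1_singletonE)
    then have "cut_edges E ends S = incident_edges E ends v" "v \<in> V"
      using cut_edges_compl[OF G S(1)] incident_edges_eq_cut_edges[OF G] by auto
    then show ?thesis using y by (simp add: incidence_kernel_def)
  next
    case 3
    then have "S = V" using multigraph_finite(1)[OF G] S(1) by auto
    then show ?thesis using cut_edges_all[OF G] by simp
  qed
qed

lemma in_pm_polytope_perturb:
  assumes G: "multigraph V E ends" and x: "in_pm_polytope V E ends x" and pos: "\<forall>e\<in>E. 0 < x e"
    and strict: "\<forall>S. nontrivial_odd_set V S \<longrightarrow> 1 < sum x (cut_edges E ends S)"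
    and y: "incidence_kernel V E ends y" and e0: "e0 \<in> E" "y e0 < 0"
  obtains t where "0 < t" "in_pm_polytope V E ends (\<lambda>e. x e + t * y e)"
    "pm_reducible V E ends (\<lambda>e. x e + t * y e)"
proof -
  let ?cut = "\<lambda>S. cut_edges E ends S"
  define I where "I = Inl ` {e\<in>E. y e < 0} \<union> Inr ` {S. S \<subseteq> V \<and> odd (card S) \<and> sum y (?cut S) < 0}"
  define a where "a = case_sum x (\<lambda>S. sum x (?cut S) - 1)"
  define b where "b = case_sum y (\<lambda>S. sum y (?cut S))"
  have nontriv: "nontrivial_odd_set V S" if "Inr S \<in> I" for S
    using that incidence_kernel_trivial_odd_cut[OF G y, of S] by (force simp: I_def)
  have "finite I" using multigraph_finite[OF G] by (simp add: I_def)
  moreover have "I \<noteq> {}" using e0 by (auto simp: I_def)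
  moreover have "0 < a i" "b i < 0" if "i \<in> I" for i
    using that pos strict nontriv by (auto simp: I_def a_def b_def)
  ultimately obtain t where t: "0 < t" "\<And>i. i \<in> I \<Longrightarrow> 0 \<le> a i + t * b i" "\<exists>i\<in>I. a i + t * b i = 0"
    by (rule ratio_test) blast+
  have sumd: "sum (\<lambda>e. x e + t * y e) A = sum x A + t * sum y A" for A
    by (simp add: sum.distrib sum_distrib_left)
  have "in_pm_polytope V E ends (\<lambda>e. x e + t * y e)"
    unfolding in_pm_polytope_def
  proof (intro conjI ballI allI impI)
    fix e assume "e \<in> E"
    then show "0 \<le> x e + t * y e"
      using t(1) t(2)[of "Inl e"] pos by (cases "y e < 0") (auto simp: I_def a_def b_def add_nonneg_nonneg less_imp_le)
  next
    fix v assume "v \<in> V"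
    then show "sum (\<lambda>e. x e + t * y e) (incident_edges E ends v) = 1"
      using x y unfolding sumd in_pm_polytope_def incidence_kernel_def by simp
  next
    fix S assume S: "S \<subseteq> V" "odd (card S)"
    then have "1 \<le> sum x (?cut S)" using x by (simp add: in_pm_polytope_def)
    then show "1 \<le> sum (\<lambda>e. x e + t * y e) (?cut S)"
      using t(1) t(2)[of "Inr S"] S unfolding sumd
      by (cases "sum y (?cut S) < 0") (auto simp: I_def a_def b_def add_increasing2)
  qed
  moreover have "pm_reducible V E ends (\<lambda>e. x e + t * y e)"
  proof -
    obtain i where i: "i \<in> I" "a i + t * b i = 0" using t(3) by blast
    show ?thesis
    proof (cases i)
      case (Inl e)
      then show ?thesis using i unfolding pm_reducible_def by (auto simp: I_def a_def b_def)
    next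
      case (Inr S)
      then have "sum (\<lambda>e. x e + t * y e) (?cut S) = 1" using i unfolding sumd by (simp add: a_def b_def)
      then show ?thesis using nontriv i Inr unfolding pm_reducible_def by blast
    qed
  qed
  ultimately show ?thesis using t(1) that by blast
qed

section \<open>A vertex of degree two\<close>

lemma sum_point_masses:
  fixes x :: "'a \<Rightarrow> real"
  assumes "finite X" "finite C" "h ` C \<subseteq> X"
  shows "(\<Sum>M\<in>{M\<in>X. P M}. \<Sum>f\<in>C. if M = h f then x f else 0) = sum x {f\<in>C. P (h f)}"
proof -
  have "(\<Sum>M\<in>{M\<in>X. P M}. \<Sum>f\<in>C. if M = h f then x f else 0) =
      (\<Sum>f\<in>C. \<Sum>M\<in>{M\<in>X. P M}. if h f = M then x f else 0)"
    by (subst sum.swap) (simp add: eq_commute)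
  also have "\<dots> = (\<Sum>f\<in>C. if P (h f) then x f else 0)"
    using assms by (intro sum.cong refl) (auto simp: sum.delta)
  also have "\<dots> = sum x {f\<in>C. P (h f)}" by (simp add: sum.inter_filter[OF assms(2)])
  finally show ?thesis .
qed

text \<open>If \<open>v\<close> has degree two with distinct neighbours \<open>u\<close>, \<open>w\<close>, the cut around \<open>N = {u, v, w}\<close>
  is tight. The shore \<open>N\<close> is decomposed by hand: when \<open>|V| = 4\<close> its contraction is no smaller
  than the graph itself.\<close>
locale degree_two_vertex =
  fixes V :: "'v set" and E :: "'e set" and ends :: "'e \<Rightarrow> 'v set" and x :: "'e \<Rightarrow> real"
    and v u w :: 'v and e1 e2 :: 'e
  assumes multigraph: "multigraph V E ends" and polytope: "in_pm_polytope V E ends x"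
    and pos: "\<forall>e\<in>E. 0 < x e" and v: "v \<in> V" and incident_v: "incident_edges E ends v = {e1, e2}"
    and e1_ne_e2: "e1 \<noteq> e2" and ends_e1: "ends e1 = {v, u}" and ends_e2: "ends e2 = {v, w}"
    and u_ne_w: "u \<noteq> w"
begin

definition N :: "'v set" where "N = {u, v, w}"

lemma edges_at_v: "e1 \<in> E" "e2 \<in> E"
  using incident_v by (auto simp: incident_edges_def)

lemma neighbours: "u \<noteq> v" "w \<noteq> v" "u \<in> V" "w \<in> V"
  using multigraph_ends[OF multigraph edges_at_v(1)] multigraph_ends[OF multigraph edges_at_v(2)]
    ends_e1 ends_e2 by auto

lemma N_subset: "N \<subseteq> V" and card_N: "card N = 3"
  using neighbours v u_ne_w by (auto simp: N_def)

lemma x_e1_e2: "x e1 + x e2 = 1"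
  using polytope v incident_v e1_ne_e2 by (auto simp: in_pm_polytope_def)

lemma edges_inside_N: "{e\<in>E. ends e \<subseteq> N} = {e1, e2} \<union> {e\<in>E. ends e = {u, w}}"
proof (intro equalityI subsetI)
  fix e assume e: "e \<in> {e\<in>E. ends e \<subseteq> N}"
  show "e \<in> {e1, e2} \<union> {e\<in>E. ends e = {u, w}}"
  proof (cases "v \<in> ends e")
    case True
    then show ?thesis using e incident_v by (auto simp: incident_edges_def)
  next
    case False
    then have "ends e \<subseteq> {u, w}" using e by (auto simp: N_def)
    moreover have "card (ends e) = 2" using multigraph_ends(2)[OF multigraph] e by auto
    ultimately have "ends e = {u, w}" using u_ne_w by (intro card_seteq) auto
    then show ?thesis using e by auto
  qed
qed (use edges_at_v ends_e1 ends_e2 in \<open>auto simp: N_def\<close>)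

text \<open>Counting the edge weights at \<open>u\<close>, \<open>v\<close>, \<open>w\<close> gives \<open>3 = x(\<delta>(N)) + 2 (1 + x(uw-edges))\<close>,
  and the odd-cut constraint \<open>x(\<delta>(N)) \<ge> 1\<close> leaves no room for edges between \<open>u\<close> and \<open>w\<close>.\<close>
lemma no_edge_uw_and_tight: "{e\<in>E. ends e = {u, w}} = {}" "sum x (cut_edges E ends N) = 1"
proof -
  let ?U = "{e\<in>E. ends e = {u, w}}"
  have fU: "finite ?U" using multigraph_finite(2)[OF multigraph] by simp
  have "e \<notin> ?U" if "e \<in> {e1, e2}" for e
    using that ends_e1 ends_e2 neighbours(1,2) by (auto simp: doubleton_eq_iff)
  then have "sum x {e\<in>E. ends e \<subseteq> N} = x e1 + x e2 + sum x ?U"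
    unfolding edges_inside_N using e1_ne_e2 fU by (simp add: sum.union_disjoint)
  moreover have "(\<Sum>z\<in>N. sum x (incident_edges E ends z)) = 3"
    using polytope N_subset card_N by (simp add: in_pm_polytope_def subset_iff)
  moreover have "1 \<le> sum x (cut_edges E ends N)"
    using polytope N_subset card_N by (simp add: in_pm_polytope_def)
  ultimately have *: "sum x (cut_edges E ends N) = 1 - 2 * sum x ?U" "sum x ?U \<le> 0"
    using sum_incident_edges[OF multigraph N_subset, of x] x_e1_e2 by linarith+
  show "?U = {}"
  proof (rule ccontr)
    assume "?U \<noteq> {}"
    then have "0 < sum x ?U" using sum_pos[OF fU] pos by auto
    with *(2) show False by simp
  qed
  with * show "sum x (cut_edges E ends N) = 1" by simp
qed

lemma cut_edge_ends:
  assumes "f \<in> cut_edges E ends N" shows "v \<notin> ends f" "u \<in> ends f \<longleftrightarrow> w \<notin> ends f"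
proof -
  have fE: "f \<in> E" using assms by (simp add: cut_edges_def)
  show v: "v \<notin> ends f"
  proof
    assume "v \<in> ends f"
    then have "f \<in> {e1, e2}" using incident_v fE by (auto simp: incident_edges_def)
    then have "ends f \<subseteq> N" using ends_e1 ends_e2 by (auto simp: N_def)
    then show False using assms by (simp add: cut_edges_def)
  qed
  have "card (ends f \<inter> N) = 1" using card_ends_Int[OF multigraph fE, of N] assms by simp
  then obtain z where "ends f \<inter> N = {z}" by (meson card_1_singletonE)
  then have z: "z \<in> ends f" "z = u \<or> z = w" and only: "\<And>y. y \<in> ends f \<Longrightarrow> y \<in> N \<Longrightarrow> y = z"
    using v by (auto simp: N_def)
  show "u \<in> ends f \<longleftrightarrow> w \<notin> ends f"
    using z only[of u] only[of w] u_ne_w by (auto simp: N_def)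
qed

lemma incident_edges_neighbour:
  assumes "z \<in> {u, w}"
  shows "incident_edges E ends z = insert (if z = u then e1 else e2) {f\<in>cut_edges E ends N. z \<in> ends f}"
proof (intro equalityI subsetI)
  fix e assume e: "e \<in> incident_edges E ends z"
  show "e \<in> insert (if z = u then e1 else e2) {f\<in>cut_edges E ends N. z \<in> ends f}"
  proof (cases "e \<in> cut_edges E ends N")
    case False
    then have "ends e \<subseteq> N" using e assms by (auto simp: cut_edges_def incident_edges_def N_def)
    then have "e \<in> {e1, e2}" using e edges_inside_N no_edge_uw_and_tight(1) by (auto simp: incident_edges_def)
    then show ?thesis using e assms ends_e1 ends_e2 u_ne_w neighbours by (auto simp: incident_edges_def)
  qed (use e in \<open>auto simp: incident_edges_def\<close>)
qed (use assms edges_at_v ends_e1 ends_e2 in \<open>auto simp: incident_edges_def cut_edges_def\<close>)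

lemma edges_at_v_not_cut: "e1 \<notin> cut_edges E ends N" "e2 \<notin> cut_edges E ends N"
  using ends_e1 ends_e2 by (auto simp: cut_edges_def N_def)

lemma sum_cut_edges_at_neighbour:
  "sum x {f\<in>cut_edges E ends N. u \<in> ends f} = x e2" "sum x {f\<in>cut_edges E ends N. w \<in> ends f} = x e1"
proof -
  have fin: "finite (cut_edges E ends N)"
    using multigraph_finite(2)[OF multigraph] by (simp add: cut_edges_def)
  have "sum x (incident_edges E ends z) = 1" if "z \<in> {u, w}" for z
    using polytope neighbours that by (auto simp: in_pm_polytope_def)
  moreover have "sum x (incident_edges E ends u) = x e1 + sum x {f\<in>cut_edges E ends N. u \<in> ends f}"
    "sum x (incident_edges E ends w) = x e2 + sum x {f\<in>cut_edges E ends N. w \<in> ends f}"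
    using incident_edges_neighbour[of u] incident_edges_neighbour[of w] edges_at_v_not_cut fin u_ne_w by simp_all
  ultimately show "sum x {f\<in>cut_edges E ends N. u \<in> ends f} = x e2"
    "sum x {f\<in>cut_edges E ends N. w \<in> ends f} = x e1"
    using x_e1_e2 by auto
qed

text \<open>The perfect matchings of the graph in which \<open>V - N\<close> is contracted are the pairs
  \<open>{f, partner f}\<close> with \<open>f\<close> in the cut; weighting each by \<open>x f\<close> represents \<open>x\<close>.\<close>
definition partner :: "'e \<Rightarrow> 'e" where "partner f = (if u \<in> ends f then e2 else e1)"

lemma partner_not_cut: "partner f \<notin> cut_edges E ends N"
  using edges_at_v_not_cut by (simp add: partner_def)

lemma partner_covers:
  assumes "f \<in> cut_edges E ends N" "z \<in> N" shows "z \<in> ends (partner f) \<longleftrightarrow> z \<notin> ends f"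
  using cut_edge_ends[OF assms(1)] assms(2) ends_e1 ends_e2 neighbours u_ne_w
  by (auto simp: partner_def N_def)

lemma contract_edges_N: "contract_edges N E ends = insert e1 (insert e2 (cut_edges E ends N))"
proof -
  have "ends e \<noteq> {}" if "e \<in> E" for e using multigraph_ends(2)[OF multigraph that] by auto
  then have "{e\<in>E. ends e \<inter> N \<noteq> {}} = cut_edges E ends N \<union> {e\<in>E. ends e \<subseteq> N}"
    unfolding cut_edges_def by blast
  then show ?thesis using edges_inside_N no_edge_uw_and_tight(1) by (auto simp: contract_edges_def)
qed

lemma perfect_matching_pair:
  assumes f: "f \<in> cut_edges E ends N" and r: "r \<in> V - N"
  shows "perfect_matching (insert r N) (contract_edges N E ends) (contract_ends N r ends) {f, partner f}"
proof -
  have M: "{f, partner f} \<subseteq> contract_edges N E ends"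
    using f contract_edges_N by (auto simp: partner_def)
  have "card ({f, partner f} \<inter> (if z = r then cut_edges E ends N else incident_edges E ends z)) = 1"
    if z: "z \<in> insert r N" for z
  proof (cases "z = r")
    case True
    then show ?thesis using f partner_not_cut by (simp add: Int_insert_left)
  next
    case False
    then have "z \<in> N" using z by blast
    moreover have "f \<in> E" "partner f \<in> E" using f edges_at_v by (auto simp: cut_edges_def partner_def)
    ultimately have "{f, partner f} \<inter> incident_edges E ends z = (if z \<in> ends f then {f} else {partner f})"
      using partner_covers[OF f] by (auto simp: incident_edges_def)
    then show ?thesis using False by simp
  qed
  then show ?thesis using M incident_edges_contract[OF multigraph N_subset r _ M]
    by (simp add: perfect_matching_def)
qed

lemma in_pm_hull_contract_N:
  assumes r: "r \<in> V - N"
  shows "in_pm_hull (insert r N) (contract_edges N E ends) (contract_ends N r ends) x"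
proof -
  let ?C = "cut_edges E ends N" and ?E = "contract_edges N E ends"
  define c where "c M = (\<Sum>f\<in>?C. if M = {f, partner f} then x f else 0)" for M
  have finC: "finite ?C" using multigraph_finite(2)[OF multigraph] by (simp add: cut_edges_def)
  have C_pos: "0 < x f" if "f \<in> ?C" for f using that pos by (simp add: cut_edges_def)
  have marg: "sum c {M\<in>Pow ?E. P M} = sum x {f\<in>?C. P {f, partner f}}" for P
    unfolding c_def using finC multigraph_finite(2)[OF multigraph]
    by (intro sum_point_masses) (auto simp: contract_edges_N partner_def)
  show ?thesis unfolding in_pm_hull_def
  proof (intro exI[of _ c] conjI allI impI ballI)
    show "0 \<le> c M" for M unfolding c_def using C_pos by (intro sum_nonneg) (simp add: less_imp_le)
    show "perfect_matching (insert r N) ?E (contract_ends N r ends) M" if cM: "c M \<noteq> 0" for M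
    proof -
      obtain f where f: "f \<in> ?C" "(if M = {f, partner f} then x f else 0) \<noteq> 0"
        using sum.not_neutral_contains_not_neutral[OF cM[unfolded c_def]] .
      then have "M = {f, partner f}" by (cases "M = {f, partner f}") auto
      then show ?thesis using perfect_matching_pair[OF f(1) r] by simp
    qed
    show "sum c (Pow ?E) = 1" using marg[of "\<lambda>_. True"] no_edge_uw_and_tight(2) by (simp add: Pow_def)
    fix e assume "e \<in> ?E"
    then consider "e \<in> ?C" | "e = e1" | "e = e2" using contract_edges_N by blast
    then show "sum c {M\<in>Pow ?E. e \<in> M} = x e"
    proof cases
      case 1
      then have "{f\<in>?C. e \<in> {f, partner f}} = {e}" using partner_not_cut by auto
      then show ?thesis using marg[of "\<lambda>M. e \<in> M"] by simp
    next
      case 2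
      have "{f\<in>?C. e \<in> {f, partner f}} = {f\<in>?C. w \<in> ends f}"
        using 2 edges_at_v_not_cut cut_edge_ends e1_ne_e2 by (auto simp: partner_def)
      then show ?thesis using marg[of "\<lambda>M. e \<in> M"] sum_cut_edges_at_neighbour 2 by simp
    next
      case 3
      have "{f\<in>?C. e \<in> {f, partner f}} = {f\<in>?C. u \<in> ends f}"
        using 3 edges_at_v_not_cut cut_edge_ends e1_ne_e2 by (auto simp: partner_def)
      then show ?thesis using marg[of "\<lambda>M. e \<in> M"] sum_cut_edges_at_neighbour 3 by simp
    qed
  qed
qed

end

section \<open>Edmonds' perfect matching polytope theorem\<close>

locale edmonds_induction =
  fixes V :: "'v set" and E :: "'e set" and ends :: "'e \<Rightarrow> 'v set"
  assumes multigraph: "multigraph V E ends"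
    and IH: "\<And>V' E' (ends' :: 'e \<Rightarrow> 'v set) x'. card V' + card E' < card V + card E \<Longrightarrow>
      multigraph V' E' ends' \<Longrightarrow> in_pm_polytope V' E' ends' x' \<Longrightarrow> in_pm_hull V' E' ends' x'"
begin

lemma in_pm_hull_contract_complement:
  assumes x: "in_pm_polytope V E ends x" and S: "S \<subseteq> V" "r \<in> S" "2 \<le> card S" "odd (card S)"
    and tight: "sum x (cut_edges E ends S) = 1"
  shows "in_pm_hull (insert r (V - S)) (contract_edges (V - S) E ends) (contract_ends (V - S) r ends) x"
proof -
  have K: "V - S \<subseteq> V" "r \<in> V - (V - S)" and VVS: "V - (V - S) = S" using S by auto
  have fin: "finite V" "finite E" using multigraph_finite[OF multigraph] by auto
  have "card (insert r (V - S)) \<le> Suc (card (V - S))" by (simp add: card_insert_le_m1)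
  also have "\<dots> < card V"
  proof -
    have "card S \<le> card V" using S(1) fin(1) by (rule card_mono[rotated])
    then show ?thesis using S(1,3) fin(1) by (simp add: card_Diff_subset finite_subset)
  qed
  finally have smaller: "card (insert r (V - S)) + card (contract_edges (V - S) E ends) < card V + card E"
    using card_mono[OF fin(2) contract_edges_subset[of "V - S" E ends]] by linarith
  have "odd (card (V - (V - S)))" "sum x (cut_edges E ends (V - S)) = 1"
    using S(4) VVS tight cut_edges_compl[OF multigraph S(1)] by simp_all
  then show ?thesis
    using IH[OF smaller multigraph_contract[OF multigraph K(1)] in_pm_polytope_contract[OF multigraph x K]] K
    by blast
qed

lemma in_pm_hull_if_reducible:
  assumes x: "in_pm_polytope V E ends x" and red: "pm_reducible V E ends x"
  shows "in_pm_hull V E ends x"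
proof (cases "\<exists>e\<in>E. x e = 0")
  case True
  then obtain e0 where e0: "e0 \<in> E" "x e0 = 0" by blast
  have fE: "finite E" using multigraph_finite(2)[OF multigraph] .
  have "card V + card (E - {e0}) < card V + card E" using card_Diff1_less[OF fE e0(1)] by simp
  then have "in_pm_hull V (E - {e0}) ends x"
    using IH multigraph_Diff_edge[OF multigraph] in_pm_polytope_Diff_zero_edge[OF fE x e0(2)] by blast
  then show ?thesis by (rule in_pm_hull_insert_zero_edge[OF fE, of x e0, OF e0(2)])
next
  case False
  then have pos: "\<forall>e\<in>E. 0 < x e" using x by (force simp: in_pm_polytope_def)
  obtain S where S: "nontrivial_odd_set V S" "sum x (cut_edges E ends S) = 1"
    using red False unfolding pm_reducible_def by blast
  then have SV: "S \<subseteq> V" and S2: "2 \<le> card S" "2 \<le> card (V - S)" and oddS: "odd (card S)"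
    by (auto simp: nontrivial_odd_set_def)
  have "card V = card S + card (V - S)"
    using SV multigraph_finite(1)[OF multigraph] by (metis card_Diff_subset card_mono finite_subset le_add_diff_inverse)
  then have oddVS: "odd (card (V - S))" using in_pm_polytope_even_card[OF multigraph x] oddS by simp
  have "V - S \<noteq> {}" "S \<noteq> {}" using S2 by (metis card.empty not_numeral_le_zero)+
  then obtain r1 r2 where r1: "r1 \<in> V - S" and r2: "r2 \<in> S" by blast
  have VVS: "V - (V - S) = S" using SV by blast
  have "in_pm_hull (insert r1 S) (contract_edges S E ends) (contract_ends S r1 ends) x"
    using in_pm_hull_contract_complement[OF x Diff_subset r1 S2(2) oddVS]
      S(2) cut_edges_compl[OF multigraph SV] unfolding VVS by simp
  moreover have "in_pm_hull (insert r2 (V - S)) (contract_edges (V - S) E ends) (contract_ends (V - S) r2 ends) x"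
    by (rule in_pm_hull_contract_complement[OF x SV r2 S2(1) oddS S(2)])
  ultimately show ?thesis using pos SV r1 r2 by (intro in_pm_hull_glue[OF multigraph]) (auto simp: cut_edges_def)
qed

lemma in_pm_hull_degree_one:
  assumes x: "in_pm_polytope V E ends x" and pos: "\<forall>e\<in>E. 0 < x e"
    and v: "v \<in> V" "incident_edges E ends v = {e0}"
  shows "in_pm_hull V E ends x"
proof -
  have fE: "finite E" using multigraph_finite(2)[OF multigraph] .
  have e0: "e0 \<in> E" "v \<in> ends e0" using v(2) by (auto simp: incident_edges_def)
  then obtain u where u: "ends e0 = {v, u}" "u \<noteq> v" using multigraph_ends_from[OF multigraph] by metis
  have vertex_sum: "sum x (incident_edges E ends z) = 1" if "z \<in> V" for z
    using x that by (simp add: in_pm_polytope_def)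
  have xe0: "x e0 = 1" using vertex_sum[OF v(1)] v(2) by simp
  have iu: "incident_edges E ends u = {e0}"
  proof (rule ccontr)
    have e0u: "e0 \<in> incident_edges E ends u" using e0 u by (auto simp: incident_edges_def)
    moreover assume "incident_edges E ends u \<noteq> {e0}"
    ultimately obtain f where f: "f \<in> incident_edges E ends u" "f \<noteq> e0" by blast
    have "sum x {e0, f} \<le> sum x (incident_edges E ends u)"
      using e0u f fE x by (intro sum_mono2) (auto simp: incident_edges_def in_pm_polytope_def)
    moreover have "u \<in> V" "0 < x f" using multigraph_ends(1)[OF multigraph e0(1)] u f pos
      by (auto simp: incident_edges_def)
    ultimately show False using vertex_sum[of u] xe0 f(2) by simp
  qed
  have "card (V - {v, u}) \<le> card V" using multigraph_finite(1)[OF multigraph] by (simp add: card_mono)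
  then have "card (V - {v, u}) + card (E - {e0}) < card V + card E"
    using card_Diff1_less[OF fE e0(1)] by linarith
  then have "in_pm_hull (V - {v, u}) (E - {e0}) ends x"
    using IH multigraph_Diff_isolated_edge[OF multigraph v(2) iu]
      in_pm_polytope_Diff_isolated_edge[OF x u(1) v(2) iu] by blast
  then show ?thesis using in_pm_hull_insert_isolated_edge[of E e0 ends v u x V] fE e0(1) u(1) xe0 v(2) iu
    by blast
qed

lemma in_pm_hull_degree_two:
  assumes x: "in_pm_polytope V E ends x" and pos: "\<forall>e\<in>E. 0 < x e"
    and v: "v \<in> V" "incident_edges E ends v = {e1, e2}" "e1 \<noteq> e2" "ends e1 \<noteq> ends e2"
  shows "in_pm_hull V E ends x"
proof -
  have e: "e1 \<in> E" "v \<in> ends e1" "e2 \<in> E" "v \<in> ends e2" using v(2) by (auto simp: incident_edges_def)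
  obtain u where u: "ends e1 = {v, u}" using multigraph_ends_from[OF multigraph e(1,2)] by metis
  obtain w where w: "ends e2 = {v, w}" using multigraph_ends_from[OF multigraph e(3,4)] by metis
  interpret D: degree_two_vertex V E ends x v u w e1 e2
    using multigraph x pos v u w by unfold_locales auto
  have "card V \<noteq> card D.N" using in_pm_polytope_even_card[OF multigraph x] D.card_N by auto
  then have "V - D.N \<noteq> {}" using D.N_subset by (metis Diff_eq_empty_iff subset_antisym)
  then obtain r1 where r1: "r1 \<in> V - D.N" by blast
  have "v \<in> D.N" by (simp add: D.N_def)
  then have "in_pm_hull (insert v (V - D.N)) (contract_edges (V - D.N) E ends) (contract_ends (V - D.N) v ends) x"
    using in_pm_hull_contract_complement[OF x D.N_subset] D.card_N D.no_edge_uw_and_tight(2) by simp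
  then show ?thesis
    using in_pm_hull_glue[OF multigraph _ D.N_subset r1 \<open>v \<in> D.N\<close> D.in_pm_hull_contract_N[OF r1]] pos
    by (simp add: cut_edges_def)
qed

lemma in_pm_hull_by_perturbation:
  assumes x: "in_pm_polytope V E ends x" and pos: "\<forall>e\<in>E. 0 < x e"
    and strict: "\<forall>S. nontrivial_odd_set V S \<longrightarrow> 1 < sum x (cut_edges E ends S)"
    and y: "incidence_kernel V E ends y" and e: "e \<in> E" "y e \<noteq> 0"
  shows "in_pm_hull V E ends x"
proof -
  obtain e2 where e2: "e2 \<in> E" "y e2 < 0"
    using incidence_kernel_negative_entry[OF multigraph y e] .
  obtain e1 where e1: "e1 \<in> E" "- y e1 < 0"
    using incidence_kernel_negative_entry[OF multigraph incidence_kernel_uminus[OF y] e(1)] e(2) by auto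
  obtain t2 where t2: "0 < t2" "in_pm_polytope V E ends (\<lambda>e. x e + t2 * y e)"
    "pm_reducible V E ends (\<lambda>e. x e + t2 * y e)"
    using in_pm_polytope_perturb[OF multigraph x pos strict y e2] .
  obtain t1 where t1: "0 < t1" "in_pm_polytope V E ends (\<lambda>e. x e + t1 * - y e)"
    "pm_reducible V E ends (\<lambda>e. x e + t1 * - y e)"
    using in_pm_polytope_perturb[OF multigraph x pos strict incidence_kernel_uminus[OF y] e1] .
  define l where "l = t1 / (t1 + t2)"
  have l: "0 \<le> l" "l \<le> 1" "1 - l = t2 / (t1 + t2)" using t1(1) t2(1) by (auto simp: l_def field_simps)
  have balance: "l * t2 - (1 - l) * t1 = 0" unfolding l(3) by (simp add: l_def)
  have "l * (x e + t2 * y e) + (1 - l) * (x e + t1 * - y e) = x e + (l * t2 - (1 - l) * t1) * y e" for e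
    by (simp add: algebra_simps)
  then have "x e = l * (x e + t2 * y e) + (1 - l) * (x e + t1 * - y e)" for e
    unfolding balance by simp
  then show ?thesis
    by (intro in_pm_hull_convex[OF in_pm_hull_if_reducible[OF t2(2,3)] in_pm_hull_if_reducible[OF t1(2,3)] l(1,2)])
      blast
qed

end

lemma not_pm_reducible_strict:
  assumes x: "in_pm_polytope V E ends x" and irreducible: "\<not> pm_reducible V E ends x"
  shows "\<forall>e\<in>E. 0 < x e" "\<forall>S. nontrivial_odd_set V S \<longrightarrow> 1 < sum x (cut_edges E ends S)"
proof -
  have "\<forall>e\<in>E. 0 \<le> x e" "\<forall>e\<in>E. x e \<noteq> 0"
    using x irreducible by (simp_all add: in_pm_polytope_def pm_reducible_def)
  then show "\<forall>e\<in>E. 0 < x e" by (simp add: order_less_le)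
  have "1 \<le> sum x (cut_edges E ends S)" "sum x (cut_edges E ends S) \<noteq> 1" if "nontrivial_odd_set V S" for S
    using x irreducible that unfolding in_pm_polytope_def pm_reducible_def nontrivial_odd_set_def by blast+
  then show "\<forall>S. nontrivial_odd_set V S \<longrightarrow> 1 < sum x (cut_edges E ends S)" by fastforce
qed

lemma in_pm_polytope_degree_cases:
  assumes G: "multigraph V E ends" and x: "in_pm_polytope V E ends x"
  obtains (empty) "V = {}"
    | (deg1) v e0 where "v \<in> V" "incident_edges E ends v = {e0}"
    | (deg2) v e1 e2 where "v \<in> V" "incident_edges E ends v = {e1, e2}" "e1 \<noteq> e2" "ends e1 \<noteq> ends e2"
    | (dense) "V \<noteq> {}" "\<forall>v\<in>V. 2 \<le> card (incident_edges E ends v)"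
        "\<not> (\<exists>v\<in>V. \<exists>e1 e2. incident_edges E ends v = {e1, e2} \<and> e1 \<noteq> e2 \<and> ends e1 \<noteq> ends e2)"
proof -
  have card_cases: "card (incident_edges E ends v) = 1 \<or> 2 \<le> card (incident_edges E ends v)" if "v \<in> V" for v
  proof -
    have "incident_edges E ends v \<noteq> {}"
      using x that unfolding in_pm_polytope_def by (metis sum.empty zero_neq_one)
    moreover have "finite (incident_edges E ends v)"
      using multigraph_finite(2)[OF G] by (simp add: incident_edges_def)
    ultimately have "card (incident_edges E ends v) \<noteq> 0" by simp
    then show ?thesis by linarith
  qed
  show ?thesis
  proof (cases "V = {}")
    case nonempty: False
    show ?thesis
    proof (cases "\<exists>v\<in>V. card (incident_edges E ends v) = 1")
      case True
      then obtain v e0 where "v \<in> V" "incident_edges E ends v = {e0}" by (metis card_1_singletonE)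
      then show ?thesis by (rule that(2))
    next
      case False
      then have "\<forall>v\<in>V. 2 \<le> card (incident_edges E ends v)" using card_cases by blast
      then show ?thesis using that(3,4) nonempty by blast
    qed
  qed (rule that(1))
qed

theorem edmonds_perfect_matching_polytope:
  assumes "multigraph V E ends" "in_pm_polytope V E ends x"
  shows "in_pm_hull V E ends x"
  using assms
proof (induction "card V + card E" arbitrary: V E ends x rule: less_induct)
  case less
  note G = less.prems(1) and x = less.prems(2)
  interpret edmonds_induction V E ends by unfold_locales (use less in blast)+
  show ?case
  proof (cases "pm_reducible V E ends x")
    case True
    then show ?thesis by (rule in_pm_hull_if_reducible[OF x])
  next
    case False
    note pos = not_pm_reducible_strict(1)[OF x False]
      and strict = not_pm_reducible_strict(2)[OF x False]
    from G x show ?thesis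
    proof (cases rule: in_pm_polytope_degree_cases)
      case empty
      then show ?thesis using G in_pm_hull_empty by simp
    next
      case deg1
      then show ?thesis by (rule in_pm_hull_degree_one[OF x pos])
    next
      case deg2
      then show ?thesis by (rule in_pm_hull_degree_two[OF x pos])
    next
      case dense
      then obtain y where "incidence_kernel V E ends y" "\<exists>e\<in>E. y e \<noteq> 0"
        using incidence_kernel_exists[OF G] by metis
      then show ?thesis using in_pm_hull_by_perturbation[OF x pos strict] by blast
    qed
  qed
qed

section \<open>Graph entropy\<close>

lemma VP_le_one:
  assumes "a \<in> VP W adj" shows "a i \<le> 1"
proof -
  obtain c where c: "\<forall>S. c S \<ge> 0" "(\<Sum>S\<in>{S. independent_set W adj S}. c S) = 1"
    "a i = (\<Sum>S\<in>{S. independent_set W adj S}. c S * (if i \<in> S then 1 else 0))"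
    using assms unfolding VP_def by blast
  have "a i \<le> (\<Sum>S\<in>{S. independent_set W adj S}. c S)"
    unfolding c(3) by (rule sum_mono) (use c(1) in auto)
  then show ?thesis using c(2) by simp
qed

lemma sum_VP_le:
  assumes "finite W" and k: "\<And>S. independent_set W adj S \<Longrightarrow> real (card S) \<le> k"
    and a: "a \<in> VP W adj"
  shows "(\<Sum>i\<in>W. a i) \<le> k"
proof -
  let ?I = "{S. independent_set W adj S}"
  obtain c where c: "\<forall>S. c S \<ge> 0" "(\<Sum>S\<in>?I. c S) = 1" "\<forall>i. a i = (\<Sum>S\<in>?I. c S * (if i \<in> S then 1 else 0))"
    using a unfolding VP_def by blast
  have "(\<Sum>i\<in>W. a i) = (\<Sum>S\<in>?I. \<Sum>i\<in>W. c S * (if i \<in> S then 1 else 0))"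
    using c(3) by (simp add: sum.swap[of _ W])
  also have "\<dots> = (\<Sum>S\<in>?I. c S * real (card S))"
  proof (rule sum.cong[OF refl])
    fix S assume "S \<in> ?I"
    then have "W \<inter> S = S" by (auto simp: independent_set_def)
    then show "(\<Sum>i\<in>W. c S * (if i \<in> S then 1 else 0)) = c S * real (card S)"
      using assms(1) by (simp add: sum_distrib_left[symmetric] sum.If_cases)
  qed
  also have "\<dots> \<le> (\<Sum>S\<in>?I. c S * k)"
    by (rule sum_mono) (use c(1) k in \<open>simp add: mult_left_mono\<close>)
  also have "\<dots> = k" using c(2) by (simp add: sum_distrib_right[symmetric])
  finally show ?thesis .
qed

lemma sum_ln_le_card_mult_ln_mean:
  fixes a :: "'i \<Rightarrow> real"
  assumes "finite W" "W \<noteq> {}" "\<And>i. i \<in> W \<Longrightarrow> 0 < a i"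
  shows "(\<Sum>i\<in>W. ln (a i)) \<le> card W * ln ((\<Sum>i\<in>W. a i) / card W)"
proof -
  define m where "m = (\<Sum>i\<in>W. a i) / card W"
  have n: "0 < real (card W)" using assms(1,2) by (simp add: card_gt_0_iff)
  have m: "0 < m" unfolding m_def using n sum_pos[OF assms] by simp
  have "(\<Sum>i\<in>W. ln (a i) - ln m) \<le> (\<Sum>i\<in>W. a i / m - 1)"
  proof (rule sum_mono)
    fix i assume "i \<in> W"
    then have "0 < a i" by (rule assms(3))
    then show "ln (a i) - ln m \<le> a i / m - 1" using ln_le_minus_one[of "a i / m"] m by (simp add: ln_div)
  qed
  also have "\<dots> = 0"
    using n m by (auto simp: sum_subtractf sum_divide_distrib[symmetric] m_def sum_distrib_right[symmetric])
  finally show ?thesis by (simp add: sum_subtractf m_def)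
qed

lemma graph_entropy_le:
  assumes "finite W" "prob_dist W p" "a \<in> VP W adj" "0 < q" "\<forall>i\<in>W. q \<le> a i"
  shows "graph_entropy W adj p \<le> log 2 (1 / q)"
proof -
  let ?P = "{i\<in>W. p i > 0}"
  let ?F = "{(\<Sum>i\<in>?P. p i * log 2 (1 / a i)) | a. a \<in> VP W adj \<and> (\<forall>i\<in>W. p i > 0 \<longrightarrow> a i > 0)}"
  have "bdd_below ?F"
  proof (rule bdd_belowI)
    fix z assume "z \<in> ?F"
    then obtain b where "b \<in> VP W adj" "\<forall>i\<in>W. p i > 0 \<longrightarrow> b i > 0"
      and z: "z = (\<Sum>i\<in>?P. p i * log 2 (1 / b i))" by blast
    then have "0 \<le> log 2 (1 / b i)" if "i \<in> ?P" for i
      using that VP_le_one[of b W adj i] by simp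
    then show "0 \<le> z" unfolding z by (intro sum_nonneg) simp
  qed
  moreover have "(\<Sum>i\<in>?P. p i * log 2 (1 / a i)) \<in> ?F" using assms(3-5) by fastforce
  ultimately have "graph_entropy W adj p \<le> (\<Sum>i\<in>?P. p i * log 2 (1 / a i))"
    unfolding graph_entropy_def by (rule cInf_lower[rotated])
  also have "\<dots> \<le> (\<Sum>i\<in>?P. p i * log 2 (1 / q))"
  proof (intro sum_mono mult_left_mono)
    fix i assume "i \<in> ?P"
    then have "q \<le> a i" "0 < a i" using assms(4,5) by force+
    then show "log 2 (1 / a i) \<le> log 2 (1 / q)" using assms(4) by (simp add: frac_le)
  qed simp
  also have "(\<Sum>i\<in>?P. p i) = (\<Sum>i\<in>W. p i)"
    using assms(1,2) by (intro sum.mono_neutral_left) (auto simp: prob_dist_def)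
  then have "(\<Sum>i\<in>?P. p i * log 2 (1 / q)) = log 2 (1 / q)"
    using assms(2) by (simp add: sum_distrib_right[symmetric] prob_dist_def)
  finally show ?thesis .
qed

lemma graph_entropy_uniform_ge:
  fixes q :: real
  assumes W: "finite W" "W \<noteq> {}" and a: "a \<in> VP W adj" "\<forall>i\<in>W. 0 < a i" and "0 < q"
    and bound: "\<And>b. b \<in> VP W adj \<Longrightarrow> (\<Sum>i\<in>W. b i) \<le> card W * q"
  shows "log 2 (1 / q) \<le> graph_entropy W adj (uniform_dist W)"
proof -
  define n where "n = real (card W)"
  have n: "0 < n" using W by (simp add: n_def card_gt_0_iff)
  have u: "uniform_dist W i = 1 / n" for i by (simp add: uniform_dist_def n_def)
  have W_pos: "{i\<in>W. uniform_dist W i > 0} = W" using n u by simp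
  let ?F = "{(\<Sum>i\<in>{i\<in>W. uniform_dist W i > 0}. uniform_dist W i * log 2 (1 / b i)) | b.
    b \<in> VP W adj \<and> (\<forall>i\<in>W. uniform_dist W i > 0 \<longrightarrow> b i > 0)}"
  have "?F \<noteq> {}" using a by blast
  moreover have "log 2 (1 / q) \<le> z" if "z \<in> ?F" for z
  proof -
    obtain b where b: "b \<in> VP W adj" "\<forall>i\<in>W. 0 < b i"
      and z: "z = (\<Sum>i\<in>W. 1 / n * log 2 (1 / b i))" using \<open>z \<in> ?F\<close> n unfolding W_pos by (auto simp: u)
    have "(\<Sum>i\<in>W. ln (b i)) \<le> n * ln ((\<Sum>i\<in>W. b i) / n)"
      using sum_ln_le_card_mult_ln_mean[OF W, of b] b(2) by (simp add: n_def)
    also have "\<dots> \<le> n * ln q"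
      using n bound[OF b(1)] sum_pos[OF W, of b] b(2) \<open>0 < q\<close> by (simp add: n_def pos_divide_le_eq mult.commute)
    finally have "(\<Sum>i\<in>W. ln (b i)) / n \<le> ln q" using n by (simp add: divide_le_eq mult.commute)
    from divide_right_mono[OF this, of "ln 2"]
    have "(\<Sum>i\<in>W. ln (b i)) / n / ln 2 \<le> ln q / ln 2" by simp
    moreover have "z = (\<Sum>i\<in>W. - ln (b i) / (n * ln 2))"
      unfolding z using b(2) by (intro sum.cong refl) (simp add: log_def ln_div)
    then have "z = (\<Sum>i\<in>W. - ln (b i)) / (n * ln 2)" by (simp add: sum_divide_distrib)
    ultimately show ?thesis using n \<open>0 < q\<close> by (simp add: log_def ln_div sum_negf divide_right_mono)
  qed
  ultimately show ?thesis unfolding graph_entropy_def by (rule cInf_greatest)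
qed

lemma entropy_symmetric_of_constant_point:
  fixes q :: real
  assumes "finite W" "0 < q" "a \<in> VP W adj" "\<forall>i\<in>W. q \<le> a i"
    and "\<And>b. b \<in> VP W adj \<Longrightarrow> (\<Sum>i\<in>W. b i) \<le> card W * q"
  shows "entropy_symmetric W adj"
  unfolding entropy_symmetric_def
proof (intro allI impI)
  fix p assume p: "prob_dist W p"
  then have "W \<noteq> {}" by (auto simp: prob_dist_def)
  moreover have "\<forall>i\<in>W. 0 < a i" using assms(2,4) by (auto intro: less_le_trans)
  ultimately show "graph_entropy W adj p \<le> graph_entropy W adj (uniform_dist W)"
    using graph_entropy_le[OF assms(1) p assms(3,2,4)] graph_entropy_uniform_ge[OF assms(1) _ assms(3) _ assms(2,5)]
    by fastforce
qed

section \<open>Cubic bridgeless graphs\<close>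

lemma multigraph_simple_graph: "simple_graph V E \<Longrightarrow> multigraph V E (\<lambda>e. e)"
  unfolding simple_graph_def multigraph_def by (meson Pow_iff finite_Pow_iff finite_subset subsetI)

lemma multigraph_cubic: "cubic_graph V E \<Longrightarrow> multigraph V E (\<lambda>e. e)"
  by (simp add: cubic_graph_def multigraph_simple_graph)

lemma cubic_card_incident_edges:
  "cubic_graph V E \<Longrightarrow> v \<in> V \<Longrightarrow> card (incident_edges E (\<lambda>e. e) v) = 3"
  unfolding cubic_graph_def degree_def incident_edges_def by auto

lemma cubic_card_edges:
  assumes "cubic_graph V E" shows "2 * card E = 3 * card V"
proof -
  have G: "multigraph V E (\<lambda>e. e)" using assms by (rule multigraph_cubic)
  have "{e\<in>E. e \<subseteq> V} = E" using multigraph_ends(1)[OF G] by blast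
  then have "(\<Sum>v\<in>V. real (card (incident_edges E (\<lambda>e. e) v))) = 2 * card E"
    using sum_incident_edges[OF G order_refl, of "\<lambda>_. 1"] cut_edges_all[OF G] by simp
  also have "(\<Sum>v\<in>V. real (card (incident_edges E (\<lambda>e. e) v))) = 3 * card V"
    using cubic_card_incident_edges[OF assms] by simp
  finally show ?thesis by linarith
qed

text \<open>Everything reachable from the inside endpoint of the only cut edge without using that
  edge stays inside \<open>S\<close>, so the edge would be a bridge.\<close>
lemma bridgeless_cut_edges_not_singleton:
  assumes G: "multigraph V E (\<lambda>e. e)" and "bridgeless E"
  shows "cut_edges E (\<lambda>e. e) S \<noteq> {e}"
proof
  assume cut: "cut_edges E (\<lambda>e. e) S = {e}"
  then have e: "e \<in> E" "e \<inter> S \<noteq> {}" "\<not> e \<subseteq> S" by (auto simp: cut_edges_def)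
  then obtain a b where ab: "a \<in> e" "a \<in> S" "b \<in> e" "b \<notin> S" by blast
  have "a \<noteq> b" using ab by blast
  then have "card e \<le> card {a, b}" using multigraph_ends(2)[OF G e(1)] by simp
  then have "e = {a, b}" using ab multigraph_ends(2)[OF G e(1)]
    by (intro card_seteq[symmetric]) (auto intro: card_ge_0_finite)
  with \<open>a \<noteq> b\<close> have conn: "(adj_edges (E - {e}))\<^sup>*\<^sup>* a b"
    using assms(2) e(1) unfolding bridgeless_def is_bridge_def by blast
  have "z \<in> S" if "(adj_edges (E - {e}))\<^sup>*\<^sup>* a z" for z
    using that
  proof (induction rule: rtranclp_induct)
    case (step y z)
    then have yz: "{y, z} \<in> E" "{y, z} \<noteq> e" by (auto simp: adj_edges_def)
    show ?case
    proof (rule ccontr)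
      assume "z \<notin> S"
      then have "{y, z} \<in> cut_edges E (\<lambda>e. e) S" using yz(1) step.IH by (auto simp: cut_edges_def)
      then show False using cut yz(2) by simp
    qed
  qed (use ab in simp)
  then show False using conn ab by blast
qed

lemma cubic_bridgeless_odd_cut:
  assumes cub: "cubic_graph V E" and "bridgeless E" and S: "S \<subseteq> V" "odd (card S)"
  shows "3 \<le> card (cut_edges E (\<lambda>e. e) S)"
proof -
  have G: "multigraph V E (\<lambda>e. e)" using cub by (rule multigraph_cubic)
  let ?C = "cut_edges E (\<lambda>e. e) S"
  have "(\<Sum>v\<in>S. real (card (incident_edges E (\<lambda>e. e) v))) = card ?C + 2 * card {e\<in>E. e \<subseteq> S}"
    using sum_incident_edges[OF G S(1), of "\<lambda>_. 1"] by simp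
  moreover have "(\<Sum>v\<in>S. real (card (incident_edges E (\<lambda>e. e) v))) = 3 * card S"
    using cubic_card_incident_edges[OF cub] S(1) by (simp add: subset_iff)
  ultimately have "3 * card S = card ?C + 2 * card {e\<in>E. e \<subseteq> S}" by linarith
  then have "odd (card ?C)" using S(2) by presburger
  moreover have "card ?C \<noteq> 1"
    using bridgeless_cut_edges_not_singleton[OF G assms(2)] by (metis card_1_singletonE)
  ultimately show ?thesis by presburger
qed

lemma cubic_bridgeless_in_pm_polytope:
  assumes cub: "cubic_graph V E" and "bridgeless E"
  shows "in_pm_polytope V E (\<lambda>e. e) (\<lambda>_. 1 / 3)"
  using cubic_card_incident_edges[OF cub] cubic_bridgeless_odd_cut[OF assms]
  by (auto simp: in_pm_polytope_def)

lemma perfect_matching_independent: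
  assumes G: "multigraph V E (\<lambda>e. e)" and M: "perfect_matching V E (\<lambda>e. e) M"
  shows "independent_set E line_adj M"
  unfolding independent_set_def
proof (intro conjI ballI)
  show ME: "M \<subseteq> E" using M by (simp add: perfect_matching_def)
  fix a b assume ab: "a \<in> M" "b \<in> M"
  show "\<not> line_adj a b"
  proof
    assume "line_adj a b"
    then obtain v where v: "v \<in> a" "v \<in> b" "a \<noteq> b" unfolding line_adj_def by blast
    have "v \<in> V" using multigraph_ends(1)[OF G] ME ab v by blast
    then have "card (incident_edges M (\<lambda>e. e) v) = 1" using M by (simp add: perfect_matching_def)
    moreover have "{a, b} \<subseteq> incident_edges M (\<lambda>e. e) v" using ab v by (auto simp: incident_edges_def)
    moreover have "finite (incident_edges M (\<lambda>e. e) v)"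
      using multigraph_finite(2)[OF G] ME by (auto simp: incident_edges_def intro: finite_subset)
    ultimately show False using v(3) by (metis card_mono card_2_iff numeral_le_one_iff semiring_norm(69))
  qed
qed

lemma cubic_bridgeless_one_third_in_VP:
  assumes cub: "cubic_graph V E" and "bridgeless E"
  shows "(\<lambda>i. if i \<in> E then 1 / 3 else 0) \<in> VP E line_adj"
proof -
  have G: "multigraph V E (\<lambda>e. e)" using cub by (rule multigraph_cubic)
  have fE: "finite E" using multigraph_finite(2)[OF G] .
  obtain c where c: "\<forall>M. 0 \<le> c M" "\<forall>M. c M \<noteq> 0 \<longrightarrow> perfect_matching V E (\<lambda>e. e) M"
    "sum c (Pow E) = 1" "\<forall>e\<in>E. sum c {M\<in>Pow E. e \<in> M} = 1 / (3::real)"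
    using edmonds_perfect_matching_polytope[OF G cubic_bridgeless_in_pm_polytope[OF assms]]
    unfolding in_pm_hull_def by blast
  let ?I = "{S. independent_set E line_adj S}"
  have I: "?I \<subseteq> Pow E" by (auto simp: independent_set_def)
  have restrict: "sum c {M\<in>?I. P M} = sum c {M\<in>Pow E. P M}" for P
    using fE I c(2) perfect_matching_independent[OF G] by (intro sum.mono_neutral_left) auto
  show ?thesis unfolding VP_def
  proof (intro CollectI exI[of _ c] conjI allI impI)
    show "0 \<le> c S" "c S \<noteq> 0 \<Longrightarrow> independent_set E line_adj S" for S
      using c(1,2) perfect_matching_independent[OF G] by auto
    show "sum c ?I = 1" using restrict[of "\<lambda>_. True"] c(3) by (simp add: Pow_def)
    fix i
    have "(\<Sum>S\<in>?I. c S * (if i \<in> S then 1 else 0)) = (\<Sum>S\<in>?I. if i \<in> S then c S else 0)"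
      by (intro sum.cong) auto
    also have "\<dots> = sum c {S\<in>?I. i \<in> S}"
      using finite_subset[OF I] fE by (intro sum.inter_filter[symmetric]) simp
    also have "\<dots> = (if i \<in> E then 1 / 3 else 0)"
    proof (cases "i \<in> E")
      case False
      have "sum c {S\<in>?I. i \<in> S} = sum c {S\<in>Pow E. i \<in> S}" by (rule restrict)
      also have "{S\<in>Pow E. i \<in> S} = {}" using False by blast
      finally show ?thesis using False by simp
    qed (use restrict[of "\<lambda>S. i \<in> S"] c(4) in simp)
    finally show "(if i \<in> E then 1 / 3 else 0) = (\<Sum>S\<in>?I. c S * (if i \<in> S then 1 else 0))" ..
  qed
qed

lemma cubic_independent_card_le:
  assumes cub: "cubic_graph V E" and S: "independent_set E line_adj S"
  shows "3 * card S \<le> card E"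
proof -
  have G: "multigraph V E (\<lambda>e. e)" using cub by (rule multigraph_cubic)
  have SE: "S \<subseteq> E" using S by (simp add: independent_set_def)
  have "pairwise disjnt S"
    using S unfolding pairwise_def disjnt_def independent_set_def line_adj_def by blast
  moreover have "card A = 2" if "A \<in> S" for A using multigraph_ends(2)[OF G] SE that by blast
  moreover have "finite A" if "A \<in> S" for A using calculation(2)[OF that] by (intro card_ge_0_finite) simp
  ultimately have "card (\<Union>S) = 2 * card S" by (simp add: card_Union_disjoint)
  moreover have "card (\<Union>S) \<le> card V"
    using multigraph_ends(1)[OF G] SE multigraph_finite(1)[OF G] by (intro card_mono) auto
  ultimately show ?thesis using cubic_card_edges[OF cub] by linarith
qed

theorem mainTheorem6:
  fixes V :: "'a set" and E :: "'a set set"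
  assumes "cubic_graph V E" and "bridgeless E"
  shows "entropy_symmetric E line_adj"
proof (rule entropy_symmetric_of_constant_point)
  show "finite E" using multigraph_finite(2)[OF multigraph_cubic[OF assms(1)]] .
  show "(\<lambda>i. if i \<in> E then 1 / 3 else 0) \<in> VP E line_adj"
    by (rule cubic_bridgeless_one_third_in_VP[OF assms])
  have "real (card S) \<le> real (card E) * (1 / 3)" if "independent_set E line_adj S" for S
    using cubic_independent_card_le[OF assms(1) that] by linarith
  then show "(\<Sum>i\<in>E. b i) \<le> real (card E) * (1 / 3)" if "b \<in> VP E line_adj" for b
    using \<open>finite E\<close> that by (intro sum_VP_le)
qed simp_all

end
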